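(* Let $G$ be a connected cubic circulant graph with edge ideal $I(G)\subseteq\Bbbk[x_1,\ldots,x_{2n}]$, let $t\ge1$, and let $\mathbf a\in\mathbb N^{2n}$ be an exponent such that $x^{\mathbf a}\notin I(G)^{(t)}$. Then $$\sqrt{I(G)^t:x^{\mathbf a}}=\sqrt{I(G)^{(t)}:x^{\mathbf a}}.$$
   Context: A cubic circulant graph is $C_{2n}(a,n)$ for integers $1\le a<n$: the simple graph on $[2n]$ in which distinct $i,j$ are adjacent iff $|i-j|\in\{a,n,2n-a\}$. $I(G)=(x_ix_j\mid\{i,j\}\in E(G))$, and $x^{\mathbf a}=x_1^{a_1}\cdots x_{2n}^{a_{2n}}$. For a squarefree monomial ideal $I=P_1\cap\cdots\cap P_r$ (minimal primary decomposition), $I^{(t)}=P_1^t\cap\cdots\cap P_r^t$. *)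

theory Defs
  imports Main "HOL-Library.Poly_Mapping"
begin

definition gen_ideal :: "'a::comm_ring_1 set \<Rightarrow> 'a set \<Rightarrow> 'a set" where
  "gen_ideal R X = {(\<Sum>i<k. r i * g i) | (k::nat) r g. \<forall>i<k. r i \<in> R \<and> g i \<in> X}"

definition is_ideal :: "'a::comm_ring_1 set \<Rightarrow> 'a set \<Rightarrow> bool" where
  "is_ideal R I \<longleftrightarrow> I \<subseteq> R \<and> 0 \<in> I \<and> (\<forall>x\<in>I. \<forall>y\<in>I. x + y \<in> I)
     \<and> (\<forall>r\<in>R. \<forall>x\<in>I. r * x \<in> I)"

fun ideal_pow :: "'a::comm_ring_1 set \<Rightarrow> 'a set \<Rightarrow> nat \<Rightarrow> 'a set" where
  "ideal_pow R I 0 = R"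
| "ideal_pow R I (Suc t) = gen_ideal R {x * y | x y. x \<in> ideal_pow R I t \<and> y \<in> I}"

definition colon :: "'a::comm_ring_1 set \<Rightarrow> 'a set \<Rightarrow> 'a \<Rightarrow> 'a set" where
  "colon R I f = {g \<in> R. g * f \<in> I}"

definition radical :: "'a::comm_ring_1 set \<Rightarrow> 'a set \<Rightarrow> 'a set" where
  "radical R I = {f \<in> R. \<exists>k. f ^ k \<in> I}"

definition prime_ideal :: "'a::comm_ring_1 set \<Rightarrow> 'a set \<Rightarrow> bool" where
  "prime_ideal R P \<longleftrightarrow> is_ideal R P \<and> P \<noteq> R
     \<and> (\<forall>a\<in>R. \<forall>b\<in>R. a * b \<in> P \<longrightarrow> a \<in> P \<or> b \<in> P)"

definition minimal_primes :: "'a::comm_ring_1 set \<Rightarrow> 'a set \<Rightarrow> 'a set set" where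
  "minimal_primes R I = {P. prime_ideal R P \<and> I \<subseteq> P \<and>
     (\<forall>Q. prime_ideal R Q \<and> I \<subseteq> Q \<and> Q \<subseteq> P \<longrightarrow> Q = P)}"

text \<open>Symbolic power of a radical (e.g. squarefree monomial) ideal: its minimal primary
  decomposition is the intersection of its minimal primes, so
  I^(t) = intersection of P^t over the minimal primes P of I.\<close>
definition symbolic_power :: "'a::comm_ring_1 set \<Rightarrow> 'a set \<Rightarrow> nat \<Rightarrow> 'a set" where
  "symbolic_power R I t = R \<inter> \<Inter> {ideal_pow R P t | P. P \<in> minimal_primes R I}"

type_synonym 'k mpoly = "(nat \<Rightarrow>\<^sub>0 nat) \<Rightarrow>\<^sub>0 'k"

definition polyring :: "nat \<Rightarrow> 'k::field mpoly set" where
  "polyring N = {p :: 'k mpoly. \<forall>m \<in> Poly_Mapping.keys p. Poly_Mapping.keys m \<subseteq> {1..N}}"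

definition var :: "nat \<Rightarrow> 'k::field mpoly" where
  "var i = Poly_Mapping.single (Poly_Mapping.single i 1) 1"

definition monom :: "nat \<Rightarrow> (nat \<Rightarrow> nat) \<Rightarrow> 'k::field mpoly" where
  "monom N e = (\<Prod>i\<in>{1..N}. var i ^ e i)"

definition circ_adj :: "nat \<Rightarrow> nat \<Rightarrow> nat \<Rightarrow> nat \<Rightarrow> bool" where
  "circ_adj n a i j \<longleftrightarrow> i \<in> {1..2*n} \<and> j \<in> {1..2*n} \<and> i \<noteq> j \<and>
     (let d = (if i \<le> j then j - i else i - j) in d = a \<or> d = n \<or> d = 2*n - a)"

definition circ_connected :: "nat \<Rightarrow> nat \<Rightarrow> bool" where
  "circ_connected n a \<longleftrightarrow> (\<forall>i\<in>{1..2*n}. \<forall>j\<in>{1..2*n}. (circ_adj n a)\<^sup>*\<^sup>* i j)"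

definition edge_ideal_circ :: "nat \<Rightarrow> nat \<Rightarrow> 'k::field mpoly set" where
  "edge_ideal_circ n a = gen_ideal (polyring (2*n)) {var i * var j | i j. circ_adj n a i j}"

end

theory Submission
  imports Defs "HOL-Number_Theory.Cong"
begin

text \<open>Every monomial \<open>x^m\<close> of an \<open>f\<close> in the radical of \<open>I(G)^(t) : x^a\<close> is shown to lie in
  the radical of \<open>I(G)^t : x^a\<close>. The minimal primes of \<open>I(G)\<close> are generated by the variables
  of the minimal vertex covers \<open>C\<close>, and \<open>f^k x^a\<close> can only lie in the \<open>t\<close>-th power of such a
  prime when \<open>f\<close> lies in the prime or \<open>a(C) \<ge> t\<close>. Hence every vertex cover avoiding the
  support \<open>U\<close> of \<open>m\<close> has \<open>a\<close>-weight at least \<open>t\<close>, and \<open>U\<close> is nonempty since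
  \<open>x^a \<notin> I(G)^(t)\<close>. In a connected cubic circulant graph, deleting a vertex \<open>v \<in> U\<close>
  together with its neighbours leaves a bipartite graph; the weighted Koenig--Egervary theorem
  on it, together with the edges from \<open>U\<close> to its neighbours, turns the weight bound into \<open>t\<close>
  edges whose endpoints outside \<open>U\<close> are paid for by \<open>x^a\<close>, that is \<open>(x^m)^t x^a \<in> I(G)^t\<close>.\<close>

section \<open>A weighted Koenig--Egervary theorem\<close>

definition endpoint_count :: "('a \<times> 'a) list \<Rightarrow> 'a \<Rightarrow> nat" where
  "endpoint_count L x = length (filter (\<lambda>p. fst p = x) L) + length (filter (\<lambda>p. snd p = x) L)"

lemma endpoint_count_Nil [simp]: "endpoint_count [] x = 0"
  by (simp add: endpoint_count_def)

lemma endpoint_count_Cons [simp]: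
  "endpoint_count (p # L) x = endpoint_count L x + (if fst p = x then 1 else 0) + (if snd p = x then 1 else 0)"
  by (simp add: endpoint_count_def)

lemma endpoint_count_append [simp]:
  "endpoint_count (L1 @ L2) x = endpoint_count L1 x + endpoint_count L2 x"
  by (simp add: endpoint_count_def)

lemma endpoint_count_replicate [simp]:
  "endpoint_count (replicate k p) x = k * ((if fst p = x then 1 else 0) + (if snd p = x then 1 else 0))"
  by (induction k) auto

lemma endpoint_count_take_le: "endpoint_count (take k L) x \<le> endpoint_count L x"
  using endpoint_count_append[of "take k L" "drop k L" x] by simp

lemma endpoint_count_eq_0: "\<forall>p\<in>set L. fst p \<noteq> x \<and> snd p \<noteq> x \<Longrightarrow> endpoint_count L x = 0"
  by (induction L) auto

lemma endpoint_count_le_length: "\<forall>p\<in>set L. fst p \<noteq> snd p \<Longrightarrow> endpoint_count L x \<le> length L"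
  by (induction L) auto

definition wsum :: "('a \<Rightarrow> nat) \<Rightarrow> 'a set \<Rightarrow> int" where
  "wsum w X = (\<Sum>x\<in>X. int (w x))"

lemma wsum_nonneg: "wsum w X \<ge> 0"
  by (simp add: wsum_def sum_nonneg)

lemma wsum_mono: "finite Y \<Longrightarrow> X \<subseteq> Y \<Longrightarrow> wsum w X \<le> wsum w Y"
  unfolding wsum_def by (rule sum_mono2) auto

lemma wsum_Un_Int: "finite X \<Longrightarrow> finite Y \<Longrightarrow> wsum w (X \<union> Y) + wsum w (X \<inter> Y) = wsum w X + wsum w Y"
  unfolding wsum_def by (rule sum.union_inter)

lemma wsum_Un_le: "finite X \<Longrightarrow> finite Y \<Longrightarrow> wsum w (X \<union> Y) \<le> wsum w X + wsum w Y"
  using wsum_Un_Int[of X Y w] wsum_nonneg[of w "X \<inter> Y"] by linarith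

lemma wsum_pos_part: "finite X \<Longrightarrow> wsum w {x\<in>X. w x > 0} = wsum w X"
  unfolding wsum_def by (rule sum.mono_neutral_left) auto

lemma wsum_decrement:
  assumes "finite X" "w u > 0"
  shows "wsum (w(u := w u - 1)) X = wsum w X - (if u \<in> X then 1 else 0)"
proof -
  have "wsum (w(u := w u - 1)) X = (\<Sum>x\<in>X. int (w x) - (if x = u then 1 else 0))"
    unfolding wsum_def by (rule sum.cong) (use assms in auto)
  also have "\<dots> = wsum w X - (if u \<in> X then 1 else 0)"
    using assms(1) by (simp add: sum_subtractf wsum_def)
  finally show ?thesis .
qed

lemma wsum_decrement2:
  assumes "finite X" "u \<noteq> v" "w u > 0" "w v > 0"
  shows "wsum (w(u := w u - 1, v := w v - 1)) X
    = wsum w X - (if u \<in> X then 1 else 0) - (if v \<in> X then 1 else 0)"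
  using wsum_decrement[OF assms(1), of w u] wsum_decrement[OF assms(1), of "w(u := w u - 1)" v] assms(2-4)
  by simp

locale bipartite =
  fixes adj :: "'a \<Rightarrow> 'a \<Rightarrow> bool" and col :: "'a \<Rightarrow> bool"
  assumes adj_sym: "adj x y \<Longrightarrow> adj y x"
    and adj_col: "adj x y \<Longrightarrow> col x \<noteq> col y"
begin

definition nbhd :: "'a set \<Rightarrow> 'a set \<Rightarrow> 'a set" where
  "nbhd W S = {y\<in>W. \<exists>x\<in>S. adj x y}"

definition deficiency :: "('a \<Rightarrow> nat) \<Rightarrow> 'a set \<Rightarrow> 'a set \<Rightarrow> int" where
  "deficiency w W S = wsum w S - wsum w (nbhd W S)"

definition w_matching :: "'a set \<Rightarrow> ('a \<Rightarrow> nat) \<Rightarrow> ('a \<times> 'a) list \<Rightarrow> bool" where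
  "w_matching W w L \<longleftrightarrow> (\<forall>p\<in>set L. fst p \<in> W \<and> snd p \<in> W \<and> adj (fst p) (snd p))
     \<and> (\<forall>x. endpoint_count L x \<le> w x)"

lemma finite_nbhd: "finite W \<Longrightarrow> finite (nbhd W S)"
  by (simp add: nbhd_def)

lemma deficiency_Un_Int:
  assumes "finite W" "finite S" "finite S'"
  shows "deficiency w W (S \<union> S') + deficiency w W (S \<inter> S') = deficiency w W S + deficiency w W S'
    + (wsum w (nbhd W S \<inter> nbhd W S') - wsum w (nbhd W (S \<inter> S')))"
proof -
  have "nbhd W (S \<union> S') = nbhd W S \<union> nbhd W S'"
    by (auto simp: nbhd_def)
  then show ?thesis
    using wsum_Un_Int[OF assms(2,3), of w] wsum_Un_Int[of "nbhd W S" "nbhd W S'" w]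
      finite_nbhd[OF assms(1)]
    by (simp add: deficiency_def)
qed

lemma wsum_nbhd_Int_le:
  "finite W \<Longrightarrow> wsum w (nbhd W (S \<inter> S')) \<le> wsum w (nbhd W S \<inter> nbhd W S')"
  by (rule wsum_mono) (auto simp: nbhd_def)

lemma max_deficiency_Int:
  assumes finW: "finite W" and AW: "A \<subseteq> W" and SA: "S \<subseteq> A" "S' \<subseteq> A"
    and dmax: "\<And>T. T \<subseteq> A \<Longrightarrow> deficiency w W T \<le> d"
    and dS: "deficiency w W S = d" "deficiency w W S' = d"
  shows "deficiency w W (S \<inter> S') = d"
    and "wsum w (nbhd W S \<inter> nbhd W S') \<le> wsum w (nbhd W (S \<inter> S'))"
proof -
  have finA: "finite A" using AW finW by (rule finite_subset)
  have finS: "finite S" "finite S'" using SA finA by (auto intro: finite_subset)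
  have "deficiency w W (S \<union> S') \<le> d" "deficiency w W (S \<inter> S') \<le> d"
    using SA by (auto intro!: dmax)
  moreover note deficiency_Un_Int[OF finW finS, of w] wsum_nbhd_Int_le[OF finW, of w S S']
  ultimately show "deficiency w W (S \<inter> S') = d"
    and "wsum w (nbhd W S \<inter> nbhd W S') \<le> wsum w (nbhd W (S \<inter> S'))"
    using dS by linarith+
qed

text \<open>The edge \<open>uv\<close> is chosen so that lowering the weights of \<open>u\<close> and \<open>v\<close> by one
  does not create a set of deficiency larger than \<open>d\<close>. If some set of maximum deficiency
  has an edge leaving it, take a smallest such set \<open>S\<close> and an edge \<open>uv\<close> leaving it from
  \<open>u \<in> S\<close>: for a set \<open>S'\<close> of maximum deficiency avoiding \<open>u\<close>, the smaller set \<open>S \<inter> S'\<close>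
  has maximum deficiency, hence no neighbours, and then \<open>S\<close> and \<open>S'\<close> have no common
  neighbour of positive weight.\<close>
lemma exists_critical_edge:
  assumes finW: "finite W" and pos: "\<And>x. x \<in> W \<Longrightarrow> w x > 0" and AW: "A \<subseteq> W"
    and dmax: "\<And>S. S \<subseteq> A \<Longrightarrow> deficiency w W S \<le> d"
    and edge: "u0 \<in> A" "v0 \<in> W" "adj u0 v0"
  shows "\<exists>u\<in>A. \<exists>v\<in>W. adj u v
    \<and> (\<forall>S'\<subseteq>A. deficiency w W S' = d \<longrightarrow> u \<notin> S' \<longrightarrow> v \<notin> nbhd W S')"
proof -
  define active where "active = {x\<in>A. \<exists>y\<in>W. adj x y}"
  have nbhd_empty: "nbhd W T = {}" if "T \<subseteq> A" "T \<inter> active = {}" for T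
    using that by (auto simp: active_def nbhd_def)
  show ?thesis
  proof (cases "\<exists>S\<subseteq>A. deficiency w W S = d \<and> S \<inter> active \<noteq> {}")
    case True
    define P where "P = (\<lambda>S. S \<subseteq> A \<and> deficiency w W S = d \<and> S \<inter> active \<noteq> {})"
    have "\<exists>S. P S" using True by (auto simp: P_def)
    then obtain S where PS: "P S" and Smin: "\<And>S'. P S' \<Longrightarrow> card S \<le> card S'"
      using ex_has_least_nat[where P=P and m=card] by metis
    then obtain u where uS: "u \<in> S" "u \<in> active" by (auto simp: P_def)
    then obtain v where v: "v \<in> W" "adj u v" by (auto simp: active_def)
    have SA: "S \<subseteq> A" and dS: "deficiency w W S = d" using PS by (auto simp: P_def)
    have "v \<notin> nbhd W S'" if S'A: "S' \<subseteq> A" and dS': "deficiency w W S' = d" and uS': "u \<notin> S'" for S'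
    proof
      assume vS': "v \<in> nbhd W S'"
      note Int = max_deficiency_Int[OF finW AW SA S'A dmax dS dS']
      have "S \<inter> S' \<inter> active = {}"
      proof (rule ccontr)
        assume "S \<inter> S' \<inter> active \<noteq> {}"
        then have "card S \<le> card (S \<inter> S')" using Int(1) SA by (intro Smin) (auto simp: P_def)
        moreover have "card (S \<inter> S') < card S"
          using SA AW finW uS uS' by (intro psubset_card_mono) (auto dest: finite_subset)
        ultimately show False by linarith
      qed
      then have "nbhd W (S \<inter> S') = {}" using SA by (intro nbhd_empty) auto
      then have "wsum w (nbhd W S \<inter> nbhd W S') \<le> 0" using Int(2) by (simp add: wsum_def)
      moreover have "wsum w {v} \<le> wsum w (nbhd W S \<inter> nbhd W S')"
        using vS' v uS by (intro wsum_mono) (use finW in \<open>auto simp: nbhd_def\<close>)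
      ultimately show False using pos[OF v(1)] by (simp add: wsum_def)
    qed
    moreover have "u \<in> A" using uS by (auto simp: active_def)
    ultimately show ?thesis using v by blast
  next
    case False
    then have "v0 \<notin> nbhd W S'" if "S' \<subseteq> A" "deficiency w W S' = d" for S'
      using that nbhd_empty[of S'] by blast
    then show ?thesis using edge by blast
  qed
qed

lemma decrement_edge_weights:
  assumes finW: "finite W" and uv: "u \<in> W" "v \<in> W" "col u" "\<not> col v" "w u > 0" "w v > 0"
    and w': "w' = w(u := w u - 1, v := w v - 1)" and W': "W' = {x\<in>W. w' x > 0}"
  shows "sum w' W' < sum w W"
    and "wsum w' {x\<in>W'. col x} = wsum w {x\<in>W. col x} - 1"
    and "S \<subseteq> {x\<in>W. col x} \<Longrightarrow> deficiency w' W' S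
      = deficiency w W S - (if u \<in> S then 1 else 0) + (if v \<in> nbhd W S then 1 else 0)"
proof -
  have "u \<noteq> v" using uv by auto
  have wsum_w': "wsum w' X = wsum w X - (if u \<in> X then 1 else 0) - (if v \<in> X then 1 else 0)"
    if "finite X" for X
    unfolding w' using wsum_decrement2[OF that \<open>u \<noteq> v\<close> uv(5,6)] .
  have "int (sum w' W') = wsum w' W'" by (simp add: wsum_def)
  also have "\<dots> = wsum w' W" unfolding W' by (rule wsum_pos_part[OF finW])
  also have "\<dots> = int (sum w W) - 2" using wsum_w'[OF finW] uv by (simp add: wsum_def)
  finally show "sum w' W' < sum w W" by linarith
  have finA: "finite {x\<in>W. col x}" using finW by simp
  have "{x\<in>W'. col x} = {x\<in>{x\<in>W. col x}. w' x > 0}" by (auto simp: W')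
  then have "wsum w' {x\<in>W'. col x} = wsum w' {x\<in>W. col x}" using wsum_pos_part[OF finA] by simp
  also have "\<dots> = wsum w {x\<in>W. col x} - 1" using wsum_w'[OF finA] uv by simp
  finally show "wsum w' {x\<in>W'. col x} = wsum w {x\<in>W. col x} - 1" .
  assume S: "S \<subseteq> {x\<in>W. col x}"
  have "wsum w' (nbhd W' S) = wsum w' (nbhd W S)"
    using wsum_pos_part[OF finite_nbhd[OF finW], of w' S] by (simp add: nbhd_def W' conj_ac)
  moreover have "u \<notin> nbhd W S" using S uv(3) adj_col by (fastforce simp: nbhd_def)
  moreover have "v \<notin> S" using S uv(4) by auto
  ultimately show "deficiency w' W' S
      = deficiency w W S - (if u \<in> S then 1 else 0) + (if v \<in> nbhd W S then 1 else 0)"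
    using wsum_w'[OF finite_subset[OF _ finA, OF S]] wsum_w'[OF finite_nbhd[OF finW]]
    by (simp add: deficiency_def)
qed

text \<open>Deficiency version of the Koenig--Egervary theorem for the colour class
  \<open>{x\<in>W. col x}\<close>, by induction on the total weight: remove the critical edge
  \<open>uv\<close> once from the weights and add it to the \<open>w\<close>-matching.\<close>
lemma w_matching_deficiency:
  "finite W \<Longrightarrow> \<forall>x\<in>W. w x > 0 \<Longrightarrow> \<exists>L S. w_matching W w L \<and> S \<subseteq> {x\<in>W. col x}
     \<and> wsum w {x\<in>W. col x} \<le> int (length L) + deficiency w W S"
proof (induction "sum w W" arbitrary: W w rule: less_induct)
  case less
  define A where "A = {x\<in>W. col x}"
  have finA: "finite A" using less.prems(1) by (simp add: A_def)
  show ?case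
  proof (cases "\<exists>u\<in>A. \<exists>v\<in>W. adj u v")
    case False
    then have "nbhd W A = {}" by (auto simp: nbhd_def)
    then have "w_matching W w [] \<and> wsum w A \<le> int (length []) + deficiency w W A"
      by (simp add: w_matching_def deficiency_def wsum_def)
    then show ?thesis unfolding A_def by blast
  next
    case True
    then obtain u0 v0 where edge: "u0 \<in> A" "v0 \<in> W" "adj u0 v0" by blast
    define d where "d = Max (deficiency w W ` Pow A)"
    have dmax: "deficiency w W S \<le> d" if "S \<subseteq> A" for S
      unfolding d_def using finA that by (intro Max_ge) auto
    have "d \<in> deficiency w W ` Pow A" unfolding d_def using finA by (intro Max_in) auto
    then obtain Sm where Sm: "Sm \<subseteq> A" "deficiency w W Sm = d" by auto
    have pos: "\<And>x. x \<in> W \<Longrightarrow> w x > 0" using less.prems(2) by blast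
    have AW: "A \<subseteq> W" by (simp add: A_def)
    obtain u v where uA: "u \<in> A" and vW: "v \<in> W" and uv: "adj u v"
      and crit: "\<forall>S'\<subseteq>A. deficiency w W S' = d \<longrightarrow> u \<notin> S' \<longrightarrow> v \<notin> nbhd W S'"
      using exists_critical_edge[OF less.prems(1) pos AW dmax edge] by blast
    have uvW: "u \<in> W" "v \<in> W" "col u" "\<not> col v" "w u > 0" "w v > 0"
      using uA vW adj_col[OF uv] pos by (auto simp: A_def)
    define w' where "w' = w(u := w u - 1, v := w v - 1)"
    define W' where "W' = {x\<in>W. w' x > 0}"
    note decr = decrement_edge_weights[OF less.prems(1) uvW w'_def W'_def]
    have "finite W'" "\<forall>x\<in>W'. w' x > 0" using less.prems(1) by (auto simp: W'_def)
    then obtain L' S' where L': "w_matching W' w' L'" and S'A': "S' \<subseteq> {x\<in>W'. col x}"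
      and IH: "wsum w' {x\<in>W'. col x} \<le> int (length L') + deficiency w' W' S'"
      using less.hyps[OF decr(1)] by blast
    have S'A: "S' \<subseteq> A" using S'A' by (auto simp: A_def W'_def)
    have "deficiency w W S' \<le> d" using S'A by (rule dmax)
    moreover have "deficiency w W S' = d \<Longrightarrow> u \<in> S' \<or> v \<notin> nbhd W S'" using crit S'A by blast
    moreover have "S' \<subseteq> {x\<in>W. col x}" using S'A by (simp add: A_def)
    ultimately have "deficiency w' W' S' \<le> d" using decr(3)[of S'] by (smt (verit))
    define L where "L = (u, v) # L'"
    have "u \<noteq> v" using uvW by auto
    then have "w_matching W w L"
      using L' uvW uv by (fastforce simp: L_def w_matching_def W'_def w'_def split: if_splits)
    moreover have "wsum w A \<le> int (length L) + deficiency w W Sm"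
      using IH decr(2) \<open>deficiency w' W' S' \<le> d\<close> Sm(2) by (simp add: L_def A_def)
    ultimately show ?thesis using Sm(1) unfolding A_def by blast
  qed
qed

theorem w_matching_vertex_cover:
  assumes "finite W"
  shows "\<exists>L C. w_matching W w L \<and> C \<subseteq> W \<and> (\<forall>x\<in>W. \<forall>y\<in>W. adj x y \<longrightarrow> x \<in> C \<or> y \<in> C)
    \<and> wsum w C \<le> int (length L)"
proof -
  define Wp where "Wp = {x\<in>W. w x > 0}"
  have finWp: "finite Wp" and "\<forall>x\<in>Wp. w x > 0" using assms by (auto simp: Wp_def)
  then obtain L S where L: "w_matching Wp w L" and SA: "S \<subseteq> {x\<in>Wp. col x}"
    and ineq: "wsum w {x\<in>Wp. col x} \<le> int (length L) + deficiency w Wp S"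
    using w_matching_deficiency by blast
  define C where "C = ({x\<in>Wp. col x} - S) \<union> nbhd Wp S \<union> {x\<in>W. w x = 0}"
  have "w_matching W w L" using L by (auto simp: w_matching_def Wp_def)
  moreover have "C \<subseteq> W" by (auto simp: C_def Wp_def nbhd_def)
  moreover have "\<forall>x\<in>W. \<forall>y\<in>W. adj x y \<longrightarrow> x \<in> C \<or> y \<in> C"
  proof (intro ballI impI)
    fix x y assume "x \<in> W" "y \<in> W" "adj x y"
    then show "x \<in> C \<or> y \<in> C"
      using adj_sym[of x y] adj_col[of x y] by (cases "col x") (auto simp: C_def Wp_def nbhd_def)
  qed
  moreover have "wsum w C \<le> int (length L)"
  proof -
    have finN: "finite (nbhd Wp S)" using finWp by (rule finite_nbhd)
    have "wsum w {x\<in>W. w x = 0} = 0" by (simp add: wsum_def)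
    then have "wsum w C \<le> wsum w ({x\<in>Wp. col x} - S) + wsum w (nbhd Wp S)"
      unfolding C_def using wsum_Un_le[of "{x\<in>Wp. col x} - S \<union> nbhd Wp S" "{x\<in>W. w x = 0}" w]
        wsum_Un_le[of "{x\<in>Wp. col x} - S" "nbhd Wp S" w] finWp finN assms by simp
    also have "wsum w ({x\<in>Wp. col x} - S) = wsum w {x\<in>Wp. col x} - wsum w S"
      unfolding wsum_def using SA finWp by (subst sum_diff) (auto intro: finite_subset)
    finally show ?thesis using ineq by (simp add: deficiency_def)
  qed
  ultimately show ?thesis by blast
qed

end

locale finite_graph =
  fixes V :: "'a set" and adj :: "'a \<Rightarrow> 'a \<Rightarrow> bool"
  assumes finite_V: "finite V"
    and adj_in_V: "adj x y \<Longrightarrow> x \<in> V \<and> y \<in> V"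
    and adj_sym: "adj x y \<Longrightarrow> adj y x"
    and adj_irrefl: "\<not> adj x x"
begin

definition vertex_cover :: "'a set \<Rightarrow> bool" where
  "vertex_cover C \<longleftrightarrow> C \<subseteq> V \<and> (\<forall>x y. adj x y \<longrightarrow> x \<in> C \<or> y \<in> C)"

lemma vertex_cover_subset: "vertex_cover C \<Longrightarrow> C \<subseteq> V"
  by (simp add: vertex_cover_def)

lemma finite_vertex_cover: "vertex_cover C \<Longrightarrow> finite C"
  using finite_V finite_subset vertex_cover_subset by blast

lemma vertex_cover_edge: "vertex_cover C \<Longrightarrow> adj x y \<Longrightarrow> x \<in> C \<or> y \<in> C"
  by (simp add: vertex_cover_def)

lemma endpoint_count_le_length_edges:
  "\<forall>p\<in>set L. adj (fst p) (snd p) \<Longrightarrow> endpoint_count L x \<le> length L"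
  using adj_irrefl by (intro endpoint_count_le_length) metis

lemma endpoint_count_outside:
  "\<forall>p\<in>set L. adj (fst p) (snd p) \<Longrightarrow> x \<notin> V \<Longrightarrow> endpoint_count L x = 0"
  using adj_in_V by (intro endpoint_count_eq_0) blast

lemma edge_list_to_neighbours:
  assumes "finite X" "\<forall>y\<in>X. \<exists>u\<in>U. adj u y" "X \<inter> U = {}"
  shows "\<exists>L. length L = sum e X \<and> (\<forall>p\<in>set L. adj (fst p) (snd p))
     \<and> (\<forall>x. x \<notin> U \<longrightarrow> endpoint_count L x = (if x \<in> X then e x else 0))"
  using assms
proof (induction X rule: finite_induct)
  case empty
  then show ?case by (intro exI[of _ "[]"]) auto
next
  case (insert y X)
  obtain L where L: "length L = sum e X" "\<forall>p\<in>set L. adj (fst p) (snd p)"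
    "\<forall>x. x \<notin> U \<longrightarrow> endpoint_count L x = (if x \<in> X then e x else 0)"
    using insert by auto
  obtain u where u: "u \<in> U" "adj u y" using insert.prems by auto
  have "y \<notin> U" using insert.prems by auto
  define L' where "L' = replicate (e y) (y, u) @ L"
  have "length L' = sum e (insert y X)" using L insert.hyps by (simp add: L'_def)
  moreover have "\<forall>p\<in>set L'. adj (fst p) (snd p)"
    using L u adj_sym by (auto simp: L'_def)
  moreover have "\<forall>x. x \<notin> U \<longrightarrow> endpoint_count L' x = (if x \<in> insert y X then e x else 0)"
    using L u \<open>y \<notin> U\<close> insert.hyps by (auto simp: L'_def)
  ultimately show ?case by blast
qed

lemma vertex_cover_nbhd_Un:
  assumes vU: "v \<in> U" and C1V: "C1 \<subseteq> V"
    and C1: "\<forall>x\<in>V - U - {y\<in>V. \<exists>u\<in>U. adj u y}. \<forall>y\<in>V - U - {y\<in>V. \<exists>u\<in>U. adj u y}.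
      adj x y \<and> x \<noteq> v \<and> y \<noteq> v \<and> \<not> adj v x \<and> \<not> adj v y \<longrightarrow> x \<in> C1 \<or> y \<in> C1"
  shows "vertex_cover ({y\<in>V. \<exists>u\<in>U. adj u y} \<union> C1)"
  unfolding vertex_cover_def
proof (intro conjI allI impI)
  show "{y\<in>V. \<exists>u\<in>U. adj u y} \<union> C1 \<subseteq> V" using C1V by auto
  fix x y assume xy: "adj x y"
  show "x \<in> {y\<in>V. \<exists>u\<in>U. adj u y} \<union> C1 \<or> y \<in> {y\<in>V. \<exists>u\<in>U. adj u y} \<union> C1"
  proof (cases "x \<in> U \<or> y \<in> U")
    case True
    then show ?thesis using xy adj_in_V[OF xy] adj_sym[OF xy] by blast
  next
    case False
    define N where "N = {y\<in>V. \<exists>u\<in>U. adj u y}"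
    show ?thesis
    proof (cases "x \<in> N \<or> y \<in> N")
      case True
      then show ?thesis by (auto simp: N_def)
    next
      case outside: False
      then have "x \<in> V - U - N" "y \<in> V - U - N" "x \<noteq> v" "y \<noteq> v" "\<not> adj v x" "\<not> adj v y"
        using False vU adj_in_V[OF xy] by (auto simp: N_def)
      then have "x \<in> C1 \<or> y \<in> C1" using C1 xy unfolding N_def by blast
      then show ?thesis by blast
    qed
  qed
qed

lemma edge_list_take_append:
  assumes "t \<le> length L1 + length L2" "\<forall>p\<in>set (L1 @ L2). adj (fst p) (snd p)"
    and "\<And>x. x \<notin> U \<Longrightarrow> endpoint_count L1 x + endpoint_count L2 x \<le> e x"
  shows "\<exists>L. length L = t \<and> (\<forall>p\<in>set L. adj (fst p) (snd p))
    \<and> (\<forall>x. x \<notin> U \<longrightarrow> endpoint_count L x \<le> e x)"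
proof (intro exI conjI allI impI)
  show "length (take t (L1 @ L2)) = t" using assms(1) by simp
  show "\<forall>p\<in>set (take t (L1 @ L2)). adj (fst p) (snd p)" using assms(2) by (auto dest: in_set_takeD)
  fix x assume "x \<notin> U"
  then show "endpoint_count (take t (L1 @ L2)) x \<le> e x"
    using endpoint_count_take_le[of t "L1 @ L2" x] assms(3) by (simp add: le_trans)
qed

text \<open>When \<open>U\<close> is independent, the edges are found by matching the neighbours of \<open>U\<close>
  into \<open>U\<close> and applying the Koenig--Egervary theorem to the rest of the graph, which lies
  outside the closed neighbourhood of \<open>v\<close> and is therefore bipartite.\<close>
lemma exists_edge_list:
  assumes UV: "U \<subseteq> V" and vU: "v \<in> U"
    and bip: "bipartite (\<lambda>x y. adj x y \<and> x \<noteq> v \<and> y \<noteq> v \<and> \<not> adj v x \<and> \<not> adj v y) col"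
    and heavy: "\<And>C. vertex_cover C \<Longrightarrow> C \<inter> U = {} \<Longrightarrow> t \<le> sum e C"
  shows "\<exists>L. length L = t \<and> (\<forall>p\<in>set L. adj (fst p) (snd p))
    \<and> (\<forall>x. x \<notin> U \<longrightarrow> endpoint_count L x \<le> e x)"
proof (cases "\<exists>u1\<in>U. \<exists>u2\<in>U. adj u1 u2")
  case True
  then obtain u1 u2 where "u1 \<in> U" "u2 \<in> U" "adj u1 u2" by blast
  then show ?thesis by (intro exI[of _ "replicate t (u1, u2)"]) auto
next
  case indep: False
  interpret B: bipartite "\<lambda>x y. adj x y \<and> x \<noteq> v \<and> y \<noteq> v \<and> \<not> adj v x \<and> \<not> adj v y" col
    by (fact bip)
  define NU where "NU = {y\<in>V. \<exists>u\<in>U. adj u y}"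
  define W where "W = V - U - NU"
  have finNU: "finite NU" and finW: "finite W" using finite_V by (auto simp: NU_def W_def)
  have NU_U: "NU \<inter> U = {}" using indep by (auto simp: NU_def)
  obtain L1 C1 where L1: "B.w_matching W e L1" and C1W: "C1 \<subseteq> W"
    and C1: "\<forall>x\<in>W. \<forall>y\<in>W. adj x y \<and> x \<noteq> v \<and> y \<noteq> v \<and> \<not> adj v x \<and> \<not> adj v y
      \<longrightarrow> x \<in> C1 \<or> y \<in> C1"
    and wC1: "wsum e C1 \<le> int (length L1)"
    using B.w_matching_vertex_cover[OF finW, of e] by blast
  have "C1 \<subseteq> V" using C1W by (auto simp: W_def)
  then have "vertex_cover (NU \<union> C1)"
    unfolding NU_def by (rule vertex_cover_nbhd_Un[OF vU _ C1[unfolded W_def NU_def]])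
  moreover have "(NU \<union> C1) \<inter> U = {}" using NU_U C1W by (auto simp: W_def)
  ultimately have "t \<le> sum e (NU \<union> C1)" by (rule heavy)
  also have "\<dots> \<le> sum e NU + sum e C1" using finNU finW C1W finite_subset by (metis sum_Un_nat le_add1 le_diff_conv)
  also have "sum e C1 \<le> length L1" using wC1 by (simp add: wsum_def flip: of_nat_sum)
  finally have t_le: "t \<le> sum e NU + length L1" by simp
  obtain L2 where L2: "length L2 = sum e NU" "\<forall>p\<in>set L2. adj (fst p) (snd p)"
    "\<forall>x. x \<notin> U \<longrightarrow> endpoint_count L2 x = (if x \<in> NU then e x else 0)"
    using edge_list_to_neighbours[OF finNU _ NU_U, of e] by (auto simp: NU_def)
  have counts: "endpoint_count L1 x + endpoint_count L2 x \<le> e x" if "x \<notin> U" for x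
  proof -
    have "endpoint_count L1 x \<le> e x" using L1 by (simp add: B.w_matching_def)
    moreover have "x \<in> NU \<Longrightarrow> endpoint_count L1 x = 0"
      using L1 by (intro endpoint_count_eq_0) (auto simp: B.w_matching_def W_def)
    ultimately show ?thesis using L2(3) that by auto
  qed
  have edges: "\<forall>p\<in>set (L1 @ L2). adj (fst p) (snd p)" using L1 L2(2) by (auto simp: B.w_matching_def)
  have "t \<le> length L1 + length L2" using t_le L2(1) by simp
  from edge_list_take_append[OF this edges counts] show ?thesis .
qed

end

section \<open>Cubic circulant graphs\<close>

lemma cong_small_iff:
  fixes M x d :: int
  assumes "- M < x" "x < M" "0 < d" "d < M"
  shows "[x = d] (mod M) \<longleftrightarrow> x = d \<or> x = d - M"
proof
  assume "[x = d] (mod M)"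
  then obtain q where q: "x - d = M * q" by (auto simp: cong_iff_dvd_diff elim: dvdE)
  have M: "0 < M" using assms by linarith
  have "M * q < M * 1" "M * (- 2) < M * q" using q assms by linarith+
  then have "q < 1" "- 2 < q" unfolding mult_less_cancel_left_pos[OF M] .
  then have "q = 0 \<or> q = - 1" by linarith
  then show "x = d \<or> x = d - M" using q by auto
next
  assume "x = d \<or> x = d - M"
  then show "[x = d] (mod M)" by (auto simp: cong_iff_dvd_diff)
qed

lemma circ_adj_iff_abs:
  assumes "a < n" "i \<in> {1..2*n}" "j \<in> {1..2*n}"
  shows "circ_adj n a i j \<longleftrightarrow> int j \<noteq> int i \<and> (\<bar>int j - int i\<bar> = int a \<or> \<bar>int j - int i\<bar> = int n
    \<or> \<bar>int j - int i\<bar> = 2 * int n - int a)"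
proof -
  have "int (if i \<le> j then j - i else i - j) = \<bar>int j - int i\<bar>" by auto
  moreover have "int (2 * n - a) = 2 * int n - int a" using assms(1) by simp
  ultimately show ?thesis using assms unfolding circ_adj_def Let_def
    by (auto split: if_splits)
qed

lemma circ_adj_iff_cong:
  assumes "1 \<le> a" "a < n"
  shows "circ_adj n a i j \<longleftrightarrow> i \<in> {1..2*n} \<and> j \<in> {1..2*n} \<and>
    ([int j = int i + int a] (mod 2 * int n) \<or> [int j = int i + int n] (mod 2 * int n)
     \<or> [int i = int j + int a] (mod 2 * int n))"
proof (cases "i \<in> {1..2*n} \<and> j \<in> {1..2*n}")
  case True
  define M where "M = 2 * int n"
  define x where "x = int j - int i"
  have range: "- M < x" "x < M" "- M < - x" "- x < M" using True by (auto simp: M_def x_def)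
  have "[int j = int i + d] (mod M) \<longleftrightarrow> [x = d] (mod M)"
    "[int i = int j + d] (mod M) \<longleftrightarrow> [- x = d] (mod M)" for d
    by (simp_all add: cong_iff_dvd_diff x_def algebra_simps)
  then have "([int j = int i + int a] (mod M) \<or> [int j = int i + int n] (mod M)
     \<or> [int i = int j + int a] (mod M))
    \<longleftrightarrow> x = int a \<or> x = int a - M \<or> x = int n \<or> x = int n - M \<or> - x = int a \<or> - x = int a - M"
    using cong_small_iff[OF range(1,2), of "int a"] cong_small_iff[OF range(1,2), of "int n"]
      cong_small_iff[OF range(3,4), of "int a"] assms by (simp add: M_def)
  moreover have "circ_adj n a i j \<longleftrightarrow> x \<noteq> 0 \<and> (\<bar>x\<bar> = int a \<or> \<bar>x\<bar> = int n \<or> \<bar>x\<bar> = M - int a)"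
    using circ_adj_iff_abs[OF assms(2)] True by (simp add: M_def x_def)
  moreover have "x \<noteq> 0 \<and> (\<bar>x\<bar> = int a \<or> \<bar>x\<bar> = int n \<or> \<bar>x\<bar> = M - int a)
    \<longleftrightarrow> x = int a \<or> x = int a - M \<or> x = int n \<or> x = int n - M \<or> - x = int a \<or> - x = int a - M"
    using assms by (auto simp: M_def abs_if)
  ultimately show ?thesis using True unfolding M_def by blast
qed (auto simp: circ_adj_def)

lemma circ_adj_sym: "circ_adj n a i j \<Longrightarrow> circ_adj n a j i"
  unfolding circ_adj_def Let_def by (auto split: if_splits)

lemma finite_graph_circ: "finite_graph {1..2*n} (circ_adj n a)"
  by unfold_locales (auto simp: circ_adj_def intro: circ_adj_sym)

lemma dvd_diff_if_cong:
  fixes x y c M g :: int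
  assumes "[x = y + c] (mod M)" "g dvd M" "g dvd c"
  shows "g dvd x - y"
proof -
  have "g dvd x - (y + c)" using dvd_trans[OF assms(2)] assms(1) by (simp add: cong_iff_dvd_diff)
  then have "g dvd (x - (y + c)) + c" using assms(3) by (rule dvd_add)
  then show ?thesis by simp
qed

lemma coprime_if_circ_connected:
  assumes "1 \<le> a" "a < n" "circ_connected n a"
  shows "coprime a n"
proof -
  define g where "g = gcd (int a) (int n)"
  have g: "g dvd 2 * int n" "g dvd int a" "g dvd int n" by (simp_all add: g_def)
  have edge_dvd: "g dvd int j - int i" if "circ_adj n a i j" for i j
  proof -
    have "g dvd int j - int i \<or> g dvd int i - int j"
      using that dvd_diff_if_cong[OF _ g(1)] g(2,3) unfolding circ_adj_iff_cong[OF assms(1,2)] by blast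
    then show ?thesis by (metis dvd_minus_iff minus_diff_eq)
  qed
  have "g dvd int j - int i" if "(circ_adj n a)\<^sup>*\<^sup>* i j" for i j
    using that
  proof (induction rule: rtranclp_induct)
    case (step j k)
    then have "g dvd (int j - int i) + (int k - int j)" using edge_dvd by (blast intro: dvd_add)
    then show ?case by simp
  qed simp
  moreover have "(circ_adj n a)\<^sup>*\<^sup>* 1 2" using assms unfolding circ_connected_def by auto
  ultimately have "g dvd 1" by fastforce
  then show ?thesis using coprime_iff_gcd_eq_1[of "int a" "int n"] by (simp add: g_def)
qed

text \<open>The colouring witnessing that the circulant graph minus the closed neighbourhood of
  \<open>v\<close> is bipartite. With \<open>b\<close> an inverse of \<open>a\<close> modulo \<open>circ_modulus n a\<close>, the label
  \<open>(x - v) b\<close> turns the \<open>a\<close>-edges into steps \<open>\<plusminus>1\<close>, and the \<open>n\<close>-edges into steps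
  \<open>+n\<close> (for odd \<open>a\<close>) or \<open>0\<close> (for even \<open>a\<close>, when \<open>n\<close> is odd). Deleting \<open>v\<close> and its
  neighbours deletes the labels \<open>0\<close> and, for odd \<open>a\<close>, also \<open>n\<close>, so label steps
  \<open>\<plusminus>1\<close> never wrap around or cross \<open>n\<close>.\<close>
definition circ_modulus :: "nat \<Rightarrow> nat \<Rightarrow> int" where
  "circ_modulus n a = (if odd a then 2 * int n else int n)"

definition circ_label :: "nat \<Rightarrow> nat \<Rightarrow> nat \<Rightarrow> int \<Rightarrow> nat \<Rightarrow> int" where
  "circ_label n a v b x = ((int x - int v) * b) mod circ_modulus n a"

definition circ_colour :: "nat \<Rightarrow> nat \<Rightarrow> nat \<Rightarrow> int \<Rightarrow> nat \<Rightarrow> bool" where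
  "circ_colour n a v b x =
     (if odd a \<and> odd n then odd x
      else if odd a then odd x \<noteq> (circ_label n a v b x < int n)
      else odd x \<noteq> odd (circ_label n a v b x))"

lemma odd_iff_if_cong:
  fixes x y c M :: int
  assumes "[x = y + c] (mod 2 * M)"
  shows "odd x \<longleftrightarrow> odd (y + c)"
proof -
  have "[x = y + c] (mod 2)" using assms by (rule cong_dvd_modulus) simp
  then show ?thesis by (simp only: cong_def odd_iff_mod_2_eq_one)
qed

lemma mod_add_half_less_iff:
  fixes k N :: int
  assumes "0 \<le> k" "k < 2 * N"
  shows "(k + N) mod (2 * N) < N \<longleftrightarrow> \<not> k < N"
proof (cases "k < N")
  case True
  then show ?thesis using assms by (simp add: mod_pos_pos_trivial)
next
  case False
  have "(k + N) mod (2 * N) = (k - N + 2 * N) mod (2 * N)" by (simp add: algebra_simps)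
  also have "\<dots> = k - N" using False assms by (simp only: mod_add_self2 mod_pos_pos_trivial)
  finally show ?thesis using False assms by simp
qed

context
  fixes n a v :: nat and b :: int
  assumes a_pos: "1 \<le> a" and a_less: "a < n" and cop: "coprime a n" and v: "v \<in> {1..2*n}"
    and b_inv: "[int a * b = 1] (mod circ_modulus n a)"
begin

lemma circ_modulus_pos: "circ_modulus n a > 0"
  using a_less by (simp add: circ_modulus_def)

lemma circ_modulus_dvd: "circ_modulus n a dvd 2 * int n"
  by (simp add: circ_modulus_def)

lemma odd_n_if_even_a: "even a \<Longrightarrow> odd n"
  using coprime_common_divisor[OF cop, of 2] by auto

lemma circ_label_range: "0 \<le> circ_label n a v b x \<and> circ_label n a v b x < circ_modulus n a"
  using circ_modulus_pos by (simp add: circ_label_def)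

lemma circ_label_cong: "[int x - int v = int a * circ_label n a v b x] (mod circ_modulus n a)"
proof -
  have "[int a * circ_label n a v b x = int a * ((int x - int v) * b)] (mod circ_modulus n a)"
    unfolding circ_label_def by (intro cong_scalar_left) simp
  also have "int a * ((int x - int v) * b) = (int a * b) * (int x - int v)" by simp
  also have "[\<dots> = 1 * (int x - int v)] (mod circ_modulus n a)"
    using b_inv by (rule cong_scalar_right)
  finally show ?thesis by (simp add: cong_sym_eq)
qed

lemma circ_label_shift:
  assumes "[int y = int x + c] (mod 2 * int n)"
  shows "circ_label n a v b y = (circ_label n a v b x + c * b) mod circ_modulus n a"
proof -
  have "[int y = int x + c] (mod circ_modulus n a)"
    using assms circ_modulus_dvd by (rule cong_dvd_modulus)
  then have "[int y - int v = int x + c - int v] (mod circ_modulus n a)"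
    by (rule cong_diff) simp
  then have "[(int y - int v) * b = (int x + c - int v) * b] (mod circ_modulus n a)"
    by (rule cong_scalar_right)
  moreover have "(int x + c - int v) * b = (int x - int v) * b + c * b"
    by (simp add: algebra_simps)
  ultimately show ?thesis by (simp add: circ_label_def cong_def mod_add_left_eq)
qed

lemma circ_label_step_a:
  assumes "[int y = int x + int a] (mod 2 * int n)"
  shows "circ_label n a v b y = (circ_label n a v b x + 1) mod circ_modulus n a"
proof -
  have "[circ_label n a v b x + int a * b = circ_label n a v b x + 1] (mod circ_modulus n a)"
    using b_inv by (rule cong_add_lcancel[THEN iffD2])
  then show ?thesis using circ_label_shift[OF assms] by (simp add: cong_def mult.commute)
qed

lemma not_cong_n_if_non_nbr:
  assumes "x \<in> {1..2*n}" "\<not> circ_adj n a v x"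
  shows "\<not> [int x = int v + int n] (mod 2 * int n)"
  using assms v circ_adj_iff_cong[OF a_pos a_less] by blast

lemma circ_label_nonzero:
  assumes x: "x \<in> {1..2*n}" "x \<noteq> v" "\<not> circ_adj n a v x"
  shows "circ_label n a v b x \<noteq> 0"
proof
  assume "circ_label n a v b x = 0"
  then have "circ_modulus n a dvd int x - int v"
    using circ_label_cong[of x] by (simp add: cong_0_iff)
  then obtain q where q: "int x - int v = circ_modulus n a * q" by blast
  have "\<bar>int x - int v\<bar> < 2 * int n" using x v by auto
  then have qM: "circ_modulus n a * \<bar>q\<bar> < 2 * int n"
    using q circ_modulus_pos by (simp add: abs_mult)
  show False
  proof (cases "odd a")
    case True
    then have "2 * int n * \<bar>q\<bar> < 2 * int n * 1" using qM by (simp add: circ_modulus_def)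
    then have "q = 0" using a_less by (simp add: mult_less_cancel_left_pos)
    then show False using q x by simp
  next
    case False
    then have "int n * \<bar>q\<bar> < int n * 2" using qM by (simp add: circ_modulus_def)
    then have "\<bar>q\<bar> < 2" using a_less by (simp add: mult_less_cancel_left_pos)
    then have "q = 0 \<or> q = 1 \<or> q = - 1" by linarith
    then show False
      using q x not_cong_n_if_non_nbr[OF x(1,3)] False
      by (auto simp: circ_modulus_def cong_iff_dvd_diff algebra_simps)
  qed
qed

lemma circ_label_ne_n:
  assumes x: "x \<in> {1..2*n}" "\<not> circ_adj n a v x" and "odd a"
  shows "circ_label n a v b x \<noteq> int n"
proof
  assume "circ_label n a v b x = int n"
  then have "[int x - int v = int a * int n] (mod 2 * int n)"
    using circ_label_cong[of x] \<open>odd a\<close> by (simp add: circ_modulus_def)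
  moreover have "odd (int a)" using \<open>odd a\<close> by simp
  then obtain k where "int a = 2 * k + 1" by (rule oddE)
  then have "[int a * int n = int n] (mod 2 * int n)" by (simp add: cong_iff_dvd_diff algebra_simps)
  ultimately have "[int x - int v = int n] (mod 2 * int n)" by (rule cong_trans)
  then have "[int x = int v + int n] (mod 2 * int n)" by (simp add: cong_iff_dvd_diff algebra_simps)
  then show False using not_cong_n_if_non_nbr[OF x] by blast
qed

lemma circ_colour_step_a:
  assumes x: "x \<in> {1..2*n}" "x \<noteq> v" "\<not> circ_adj n a v x"
    and y: "y \<in> {1..2*n}" "y \<noteq> v" "\<not> circ_adj n a v y"
    and xy: "[int y = int x + int a] (mod 2 * int n)"
  shows "circ_colour n a v b x \<noteq> circ_colour n a v b y"
proof -
  have Ky: "circ_label n a v b y = circ_label n a v b x + 1"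
    using circ_label_step_a[OF xy] circ_label_nonzero[OF y] circ_label_range[of x]
    by (cases "circ_label n a v b x + 1 = circ_modulus n a") auto
  have "odd (int y) \<longleftrightarrow> odd (int x + int a)" using xy by (rule odd_iff_if_cong)
  then show ?thesis
    using Ky circ_label_ne_n[OF y(1,3)] by (auto simp: circ_colour_def)
qed

lemma circ_colour_step_n:
  assumes x: "x \<in> {1..2*n}" "x \<noteq> v" "\<not> circ_adj n a v x"
    and y: "y \<in> {1..2*n}" "y \<noteq> v" "\<not> circ_adj n a v y"
    and xy: "[int y = int x + int n] (mod 2 * int n)"
  shows "circ_colour n a v b x \<noteq> circ_colour n a v b y"
proof -
  have parity: "odd (int y) \<longleftrightarrow> odd (int x + int n)" using xy by (rule odd_iff_if_cong)
  show ?thesis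
  proof (cases "odd a")
    case True
    then have "2 * int n dvd int a * b - 1" using b_inv by (simp add: circ_modulus_def cong_iff_dvd_diff)
    then have "2 dvd int a * b - 1" using dvd_trans[OF dvd_triv_left[of 2 "int n"]] by blast
    then have "odd b" by auto
    then obtain k where "b = 2 * k + 1" by (metis oddE)
    then have "[circ_label n a v b x + int n * b = circ_label n a v b x + int n] (mod 2 * int n)"
      by (simp add: cong_iff_dvd_diff algebra_simps)
    then have "circ_label n a v b y = (circ_label n a v b x + int n) mod (2 * int n)"
      using circ_label_shift[OF xy] True by (simp add: circ_modulus_def cong_def)
    moreover have "0 \<le> circ_label n a v b x" "circ_label n a v b x < 2 * int n"
      using circ_label_range[of x] True by (auto simp: circ_modulus_def)
    ultimately have "(circ_label n a v b y < int n) \<noteq> (circ_label n a v b x < int n)"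
      using mod_add_half_less_iff by simp
    then show ?thesis using True parity by (auto simp: circ_colour_def)
  next
    case False
    then have "circ_label n a v b y = circ_label n a v b x"
      using circ_label_shift[OF xy] by (simp add: circ_modulus_def circ_label_def)
    then show ?thesis using False odd_n_if_even_a parity by (simp add: circ_colour_def)
  qed
qed

lemma circ_bipartite_off_nbhd:
  "bipartite (\<lambda>x y. circ_adj n a x y \<and> x \<noteq> v \<and> y \<noteq> v \<and> \<not> circ_adj n a v x \<and> \<not> circ_adj n a v y)
    (circ_colour n a v b)"
proof
  fix x y
  assume "circ_adj n a x y \<and> x \<noteq> v \<and> y \<noteq> v \<and> \<not> circ_adj n a v x \<and> \<not> circ_adj n a v y"
  then show "circ_colour n a v b x \<noteq> circ_colour n a v b y"
    using circ_adj_iff_cong[OF a_pos a_less, of x y] circ_colour_step_a[of x y] circ_colour_step_a[of y x]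
      circ_colour_step_n[of x y] by auto
qed (auto intro: circ_adj_sym)

end

lemma circ_bipartite_off_nbhd_exists:
  assumes "1 \<le> a" "a < n" "coprime a n" "v \<in> {1..2*n}"
  shows "\<exists>col. bipartite
    (\<lambda>x y. circ_adj n a x y \<and> x \<noteq> v \<and> y \<noteq> v \<and> \<not> circ_adj n a v x \<and> \<not> circ_adj n a v y) col"
proof -
  have "coprime (int a) (circ_modulus n a)"
    using assms(3) by (simp add: circ_modulus_def)
  then obtain b where "[int a * b = 1] (mod circ_modulus n a)" using cong_solve_coprime_int by blast
  then show ?thesis using circ_bipartite_off_nbhd[OF assms] by blast
qed

section \<open>Ideals of a subring\<close>

definition subring :: "'a::comm_ring_1 set \<Rightarrow> bool" where
  "subring R \<longleftrightarrow> 0 \<in> R \<and> 1 \<in> R \<and> (\<forall>x\<in>R. \<forall>y\<in>R. x + y \<in> R \<and> x * y \<in> R) \<and> (\<forall>x\<in>R. - x \<in> R)"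

context
  fixes R :: "'a::comm_ring_1 set"
  assumes R: "subring R"
begin

lemma subring_0: "0 \<in> R" and subring_1: "1 \<in> R"
  and subring_add: "x \<in> R \<Longrightarrow> y \<in> R \<Longrightarrow> x + y \<in> R"
  and subring_mult: "x \<in> R \<Longrightarrow> y \<in> R \<Longrightarrow> x * y \<in> R"
  and subring_uminus: "x \<in> R \<Longrightarrow> - x \<in> R"
  using R by (auto simp: subring_def)

lemma subring_sum: "finite A \<Longrightarrow> (\<And>i. i \<in> A \<Longrightarrow> f i \<in> R) \<Longrightarrow> sum f A \<in> R"
  by (induction A rule: finite_induct) (auto intro: subring_0 subring_add)

lemma subring_power: "x \<in> R \<Longrightarrow> x ^ k \<in> R"
  by (induction k) (auto intro: subring_1 subring_mult)

lemma subring_of_nat: "of_nat k \<in> R"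
  by (induction k) (auto intro: subring_0 subring_1 subring_add)

lemma ideal_subset: "is_ideal R J \<Longrightarrow> J \<subseteq> R"
  by (simp add: is_ideal_def)

lemma ideal_add: "is_ideal R J \<Longrightarrow> x \<in> J \<Longrightarrow> y \<in> J \<Longrightarrow> x + y \<in> J"
  by (simp add: is_ideal_def)

lemma ideal_mult_left: "is_ideal R J \<Longrightarrow> r \<in> R \<Longrightarrow> x \<in> J \<Longrightarrow> r * x \<in> J"
  by (simp add: is_ideal_def)

lemma ideal_mult_right: "is_ideal R J \<Longrightarrow> r \<in> R \<Longrightarrow> x \<in> J \<Longrightarrow> x * r \<in> J"
  by (simp add: is_ideal_def mult.commute)

lemma ideal_diff: "is_ideal R J \<Longrightarrow> x \<in> J \<Longrightarrow> y \<in> J \<Longrightarrow> x - y \<in> J"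
  using ideal_mult_left[of J "- 1" y] ideal_add[of J x "- 1 * y"] subring_uminus[OF subring_1] by simp

lemma ideal_sum:
  assumes "is_ideal R J"
  shows "finite A \<Longrightarrow> (\<And>i. i \<in> A \<Longrightarrow> f i \<in> J) \<Longrightarrow> sum f A \<in> J"
  by (induction A rule: finite_induct) (use assms in \<open>auto simp: is_ideal_def\<close>)

lemma is_ideal_gen_ideal:
  assumes "X \<subseteq> R"
  shows "is_ideal R (gen_ideal R X)"
  unfolding is_ideal_def
proof (intro conjI ballI)
  show "gen_ideal R X \<subseteq> R"
    using assms by (auto simp: gen_ideal_def intro!: subring_sum subring_mult)
  show "0 \<in> gen_ideal R X" unfolding gen_ideal_def by (rule CollectI, rule exI[of _ 0]) auto
next
  fix x y assume x: "x \<in> gen_ideal R X" and y: "y \<in> gen_ideal R X"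
  obtain k1 r1 g1 where 1: "x = (\<Sum>(i::nat)<k1. r1 i * g1 i)" "\<forall>i<k1. r1 i \<in> R \<and> g1 i \<in> X"
    using x unfolding gen_ideal_def by blast
  obtain k2 r2 g2 where 2: "y = (\<Sum>(i::nat)<k2. r2 i * g2 i)" "\<forall>i<k2. r2 i \<in> R \<and> g2 i \<in> X"
    using y unfolding gen_ideal_def by blast
  define r where "r i = (if i < k1 then r1 i else r2 (i - k1))" for i
  define g where "g i = (if i < k1 then g1 i else g2 (i - k1))" for i
  have split: "(\<Sum>i<k1 + k2. h i) = (\<Sum>i<k1. h i) + (\<Sum>i<k2. h (k1 + i))" for h :: "nat \<Rightarrow> 'a"
    by (induction k2) (auto simp: add.assoc)
  have "(\<Sum>i<k1 + k2. r i * g i) = x + y"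
    unfolding split 1 2 r_def g_def by simp
  moreover have "\<forall>i<k1 + k2. r i \<in> R \<and> g i \<in> X" using 1 2 by (auto simp: r_def g_def)
  ultimately show "x + y \<in> gen_ideal R X" unfolding gen_ideal_def
    by (intro CollectI exI[of _ "k1 + k2"] exI[of _ r] exI[of _ g]) simp
next
  fix s x assume s: "s \<in> R" and "x \<in> gen_ideal R X"
  then obtain k r g where x: "x = (\<Sum>(i::nat)<k. r i * g i)" "\<forall>i<k. r i \<in> R \<and> g i \<in> X"
    unfolding gen_ideal_def by blast
  have "s * x = (\<Sum>i<k. (s * r i) * g i)" unfolding x by (simp add: sum_distrib_left mult.assoc)
  moreover have "\<forall>i<k. s * r i \<in> R \<and> g i \<in> X" using x s by (auto intro: subring_mult)
  ultimately show "s * x \<in> gen_ideal R X" unfolding gen_ideal_def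
    by (intro CollectI exI[of _ k] exI[of _ "\<lambda>i. s * r i"] exI[of _ g]) simp
qed

lemma mult_generator_in_gen_ideal: "x \<in> X \<Longrightarrow> r \<in> R \<Longrightarrow> r * x \<in> gen_ideal R X"
  unfolding gen_ideal_def
  by (rule CollectI, rule exI[of _ 1], rule exI[of _ "\<lambda>_. r"], rule exI[of _ "\<lambda>_. x"]) auto

lemma generator_in_gen_ideal: "x \<in> X \<Longrightarrow> x \<in> gen_ideal R X"
  using mult_generator_in_gen_ideal[of x X 1] subring_1 by simp

lemma gen_ideal_least: "is_ideal R J \<Longrightarrow> X \<subseteq> J \<Longrightarrow> gen_ideal R X \<subseteq> J"
  unfolding gen_ideal_def by (auto intro!: ideal_sum ideal_mult_left)

lemma is_ideal_ideal_pow: "I \<subseteq> R \<Longrightarrow> is_ideal R (ideal_pow R I t)"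
proof (induction t)
  case 0
  then show ?case using subring_0 subring_add subring_mult by (auto simp: is_ideal_def)
next
  case (Suc t)
  have "{x * y |x y. x \<in> ideal_pow R I t \<and> y \<in> I} \<subseteq> R"
    using ideal_subset[OF Suc.IH[OF Suc.prems]] Suc.prems by (auto intro: subring_mult)
  then show ?case by (simp add: is_ideal_gen_ideal)
qed

lemma ideal_pow_mono: "I \<subseteq> J \<Longrightarrow> ideal_pow R I t \<subseteq> ideal_pow R J t"
proof (induction t)
  case (Suc t)
  then have "{x * y |x y. x \<in> ideal_pow R I t \<and> y \<in> I} \<subseteq> {x * y |x y. x \<in> ideal_pow R J t \<and> y \<in> J}"
    by blast
  then show ?case unfolding ideal_pow.simps gen_ideal_def by blast
qed simp

lemma mult_in_ideal_pow_Suc: "x \<in> ideal_pow R I t \<Longrightarrow> y \<in> I \<Longrightarrow> x * y \<in> ideal_pow R I (Suc t)"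
  by (simp, rule generator_in_gen_ideal) blast

lemma is_ideal_colon: "is_ideal R J \<Longrightarrow> f \<in> R \<Longrightarrow> is_ideal R (colon R J f)"
  unfolding colon_def is_ideal_def by (auto intro: subring_add subring_mult simp: distrib_right mult.assoc)

lemma radical_add:
  assumes J: "is_ideal R J" and x: "x \<in> radical R J" and y: "y \<in> radical R J"
  shows "x + y \<in> radical R J"
proof -
  obtain k l where xk: "x \<in> R" "x ^ k \<in> J" and yl: "y \<in> R" "y ^ l \<in> J"
    using x y by (auto simp: radical_def)
  have "(x + y) ^ (k + l) = (\<Sum>i\<le>k+l. of_nat ((k+l) choose i) * x ^ i * y ^ (k + l - i))"
    by (rule binomial_ring)
  also have "\<dots> \<in> J"
  proof (rule ideal_sum[OF J], simp)
    fix i assume "i \<in> {..k+l}"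
    show "of_nat ((k+l) choose i) * x ^ i * y ^ (k + l - i) \<in> J"
    proof (cases "k \<le> i")
      case True
      then have "x ^ i = x ^ (i - k) * x ^ k" by (simp flip: power_add)
      then have "of_nat ((k+l) choose i) * x ^ i * y ^ (k + l - i)
          = (of_nat ((k+l) choose i) * x ^ (i - k) * y ^ (k + l - i)) * x ^ k"
        by (simp add: algebra_simps)
      also have "\<dots> \<in> J" using xk yl by (intro ideal_mult_left[OF J]) (auto intro!: subring_mult subring_power subring_of_nat)
      finally show ?thesis .
    next
      case False
      then have "y ^ (k + l - i) = y ^ (k - i) * y ^ l" by (simp flip: power_add)
      then have "of_nat ((k+l) choose i) * x ^ i * y ^ (k + l - i)
          = (of_nat ((k+l) choose i) * x ^ i * y ^ (k - i)) * y ^ l"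
        by (simp add: algebra_simps)
      also have "\<dots> \<in> J" using xk yl by (intro ideal_mult_left[OF J]) (auto intro!: subring_mult subring_power subring_of_nat)
      finally show ?thesis .
    qed
  qed
  finally show ?thesis using xk yl by (auto simp: radical_def intro: subring_add)
qed

lemma radical_mult:
  assumes J: "is_ideal R J" and r: "r \<in> R" and x: "x \<in> radical R J"
  shows "r * x \<in> radical R J"
proof -
  obtain k where xk: "x \<in> R" "x ^ k \<in> J" using x by (auto simp: radical_def)
  have "(r * x) ^ k = r ^ k * x ^ k" by (simp add: power_mult_distrib)
  also have "\<dots> \<in> J" using r xk by (intro ideal_mult_left[OF J]) (auto intro: subring_power)
  finally show ?thesis using r xk by (auto simp: radical_def intro: subring_mult)
qed

lemma radical_sum:
  assumes J: "is_ideal R J"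
  shows "finite A \<Longrightarrow> (\<And>i. i \<in> A \<Longrightarrow> f i \<in> radical R J) \<Longrightarrow> sum f A \<in> radical R J"
proof (induction A rule: finite_induct)
  case empty
  have "(0::'a) ^ 1 \<in> J" using J by (simp add: is_ideal_def)
  then show ?case using subring_0 unfolding radical_def by (auto intro!: exI[of _ 1])
next
  case (insert x F)
  then show ?case using radical_add[OF J] by simp
qed

lemma power_add_ideal:
  assumes J: "is_ideal R J" and a: "a \<in> R" and b: "b \<in> J"
  shows "\<exists>h\<in>J. (a + b) ^ k = a ^ k + h"
proof (induction k)
  case 0
  then show ?case using J by (auto simp: is_ideal_def)
next
  case (Suc k)
  then obtain h where h: "h \<in> J" "(a + b) ^ k = a ^ k + h" by blast
  have "(a + b) ^ Suc k = a ^ Suc k + (a * h + b * a ^ k + b * h)"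
    unfolding power_Suc h(2) by (simp add: algebra_simps)
  moreover have "a * h + b * a ^ k + b * h \<in> J"
    using h(1) a b ideal_subset[OF J]
    by (intro ideal_add[OF J] ideal_mult_left[OF J] ideal_mult_right[OF J]) (auto intro: subring_power)
  ultimately show ?case by blast
qed

lemma ideal_pow_subset_symbolic_power:
  assumes "I \<subseteq> R"
  shows "ideal_pow R I t \<subseteq> symbolic_power R I t"
proof
  fix x assume x: "x \<in> ideal_pow R I t"
  have "x \<in> R" using ideal_subset[OF is_ideal_ideal_pow[OF assms]] x by blast
  moreover have "x \<in> ideal_pow R P t" if "P \<in> minimal_primes R I" for P
    using that x ideal_pow_mono[of I P] by (auto simp: minimal_primes_def)
  ultimately show "x \<in> symbolic_power R I t" by (auto simp: symbolic_power_def)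
qed

end

section \<open>The polynomial ring and ideals generated by variables\<close>

lemma keys_add_nat: "Poly_Mapping.keys ((a::nat \<Rightarrow>\<^sub>0 nat) + b) = Poly_Mapping.keys a \<union> Poly_Mapping.keys b"
  by (auto simp: in_keys_iff lookup_add)

lemma subring_polyring: "subring (polyring N :: 'k::field mpoly set)"
  unfolding subring_def
proof (intro conjI ballI)
  fix x y :: "'k mpoly"
  assume x: "x \<in> polyring N" and y: "y \<in> polyring N"
  show "x + y \<in> polyring N" using x y keys_add[of x y] by (auto simp: polyring_def)
  show "x * y \<in> polyring N" using x y keys_mult[of x y] by (force simp: polyring_def keys_add_nat)
next
  fix x :: "'k mpoly" assume "x \<in> polyring N"
  then show "- x \<in> polyring N" by (simp add: polyring_def)
qed (auto simp: polyring_def)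

lemma single_in_polyring: "Poly_Mapping.keys m \<subseteq> {1..N} \<Longrightarrow> (Poly_Mapping.single m c :: 'k::field mpoly) \<in> polyring N"
  by (auto simp: polyring_def)

lemma var_in_polyring: "i \<in> {1..N} \<Longrightarrow> (var i :: 'k::field mpoly) \<in> polyring N"
  unfolding var_def by (rule single_in_polyring) auto

lemma var_pow: "(var i :: 'k::field mpoly) ^ k = Poly_Mapping.single (Poly_Mapping.single i k) 1"
proof (induction k)
  case 0 then show ?case by simp
next
  case (Suc k)
  have "(var i :: 'k mpoly) ^ Suc k
      = Poly_Mapping.single (Poly_Mapping.single i 1) 1 * Poly_Mapping.single (Poly_Mapping.single i k) 1"
    using Suc by (simp add: var_def)
  also have "\<dots> = Poly_Mapping.single (Poly_Mapping.single i (Suc k)) 1"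
    by (simp add: mult_single single_add[symmetric])
  finally show ?case .
qed

lemma prod_single: "finite I \<Longrightarrow> (\<Prod>i\<in>I. Poly_Mapping.single (f i) (1::'k::field)) = Poly_Mapping.single (\<Sum>i\<in>I. f i) 1"
  by (induction I rule: finite_induct) (auto simp: mult_single)

definition monom_exp :: "nat \<Rightarrow> (nat \<Rightarrow> nat) \<Rightarrow> (nat \<Rightarrow>\<^sub>0 nat)" where
  "monom_exp N e = (\<Sum>i\<in>{1..N}. Poly_Mapping.single i (e i))"

lemma monom_eq_single: "(monom N e :: 'k::field mpoly) = Poly_Mapping.single (monom_exp N e) 1"
  unfolding monom_def monom_exp_def by (simp add: var_pow prod_single)

lemma lookup_monom_exp: "Poly_Mapping.lookup (monom_exp N e) j = (if j \<in> {1..N} then e j else 0)"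
  unfolding monom_exp_def by (auto simp: lookup_sum lookup_single when_def)

lemma keys_monom_exp: "Poly_Mapping.keys (monom_exp N e) \<subseteq> {1..N}"
  by (auto simp: in_keys_iff lookup_monom_exp split: if_splits)

definition deg_in :: "nat set \<Rightarrow> (nat \<Rightarrow>\<^sub>0 nat) \<Rightarrow> nat" where
  "deg_in C m = (\<Sum>i\<in>C. Poly_Mapping.lookup m i)"

lemma deg_in_add: "deg_in C (a + b) = deg_in C a + deg_in C b"
  by (simp add: deg_in_def lookup_add sum.distrib)

lemma deg_in_0 [simp]: "deg_in C 0 = 0"
  by (simp add: deg_in_def)

lemma deg_in_single: "finite C \<Longrightarrow> deg_in C (Poly_Mapping.single i k) = (if i \<in> C then k else 0)"
  by (simp add: deg_in_def lookup_single when_def)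

lemma deg_in_monom_exp: "C \<subseteq> {1..N} \<Longrightarrow> deg_in C (monom_exp N e) = sum e C"
  unfolding deg_in_def by (rule sum.cong) (auto simp: lookup_monom_exp)

lemma deg_in_pos_iff: "finite C \<Longrightarrow> deg_in C m \<ge> 1 \<longleftrightarrow> (\<exists>i\<in>C. i \<in> Poly_Mapping.keys m)"
proof -
  assume "finite C"
  then have "deg_in C m = 0 \<longleftrightarrow> (\<forall>i\<in>C. Poly_Mapping.lookup m i = 0)" by (simp add: deg_in_def)
  then show ?thesis by (auto simp: in_keys_iff Suc_le_eq)
qed

lemma split_var_if_deg_in_pos:
  assumes "finite C" "deg_in C m \<ge> 1"
  shows "\<exists>i\<in>C. \<exists>m'. m = m' + Poly_Mapping.single i 1 \<and> Poly_Mapping.keys m' \<subseteq> Poly_Mapping.keys m"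
proof -
  obtain i where i: "i \<in> C" "Poly_Mapping.lookup m i \<ge> 1"
    using assms deg_in_pos_iff[of C m] by (auto simp: in_keys_iff Suc_le_eq)
  define m' where "m' = m - Poly_Mapping.single i 1"
  have "m = m' + Poly_Mapping.single i 1"
    by (rule poly_mapping_eqI) (use i in \<open>auto simp: m'_def lookup_add lookup_minus lookup_single when_def\<close>)
  moreover have "Poly_Mapping.keys m' \<subseteq> Poly_Mapping.keys m" by (auto simp: m'_def in_keys_iff lookup_minus)
  ultimately show ?thesis using i(1) by blast
qed

lemma keys_mult_deg_in_ge:
  assumes "\<forall>m\<in>Poly_Mapping.keys p. deg_in C m \<ge> \<alpha>" "\<forall>m\<in>Poly_Mapping.keys q. deg_in C m \<ge> \<beta>"
  shows "\<forall>m\<in>Poly_Mapping.keys (p * q :: 'k::field mpoly). deg_in C m \<ge> \<alpha> + \<beta>"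
  using keys_mult[of p q] assms by (force simp: deg_in_add)

lemma keys_mult_deg_in_eq:
  assumes "\<forall>m\<in>Poly_Mapping.keys p. deg_in C m = \<alpha>" "\<forall>m\<in>Poly_Mapping.keys q. deg_in C m = \<beta>"
  shows "\<forall>m\<in>Poly_Mapping.keys (p * q :: 'k::field mpoly). deg_in C m = \<alpha> + \<beta>"
  using keys_mult[of p q] assms by (force simp: deg_in_add)

lemma keys_power_deg_in_eq:
  assumes "\<forall>m\<in>Poly_Mapping.keys p. deg_in C m = 0"
  shows "\<forall>m\<in>Poly_Mapping.keys (p ^ k :: 'k::field mpoly). deg_in C m = 0"
proof (induction k)
  case 0 then show ?case by simp
next
  case (Suc k) then show ?case using keys_mult_deg_in_eq[OF assms Suc] by simp
qed

lemma keys_sum_all: "(\<And>i. i \<in> A \<Longrightarrow> \<forall>m\<in>Poly_Mapping.keys (f i). P m) \<Longrightarrow> \<forall>m\<in>Poly_Mapping.keys (sum f A). P m"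
  using keys_sum[of f A] by blast

lemma gen_ideal_keys:
  assumes g: "g \<in> gen_ideal (polyring N) X" and X: "\<forall>x\<in>X. \<forall>m\<in>Poly_Mapping.keys x. deg_in C m \<ge> s"
  shows "\<forall>m\<in>Poly_Mapping.keys (g :: 'k::field mpoly). deg_in C m \<ge> s"
proof -
  obtain k r gg where 1: "g = (\<Sum>(i::nat)<k. r i * gg i)" "\<forall>i<k. r i \<in> polyring N \<and> gg i \<in> X"
    using g unfolding gen_ideal_def by blast
  show ?thesis unfolding 1(1)
  proof (rule keys_sum_all)
    fix i assume "i \<in> {..<k}"
    then have "\<forall>m\<in>Poly_Mapping.keys (gg i). deg_in C m \<ge> s" using 1 X by auto
    then show "\<forall>m\<in>Poly_Mapping.keys (r i * gg i). s \<le> deg_in C m"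
      using keys_mult_deg_in_ge[where p="r i" and C=C and \<alpha>=0 and q="gg i" and \<beta>=s] by auto
  qed
qed

definition var_ideal :: "nat \<Rightarrow> nat set \<Rightarrow> 'k::field mpoly set" where
  "var_ideal N C = gen_ideal (polyring N) {var i | i. i \<in> C}"

lemma var_ideal_keys:
  assumes "finite C" "g \<in> var_ideal N C" shows "\<forall>m\<in>Poly_Mapping.keys (g :: 'k::field mpoly). deg_in C m \<ge> 1"
proof -
  have "\<forall>x\<in>{var i |i. i \<in> C}. \<forall>m\<in>Poly_Mapping.keys (x :: 'k mpoly). deg_in C m \<ge> 1"
    using assms(1) by (auto simp: var_def deg_in_single)
  then show ?thesis using gen_ideal_keys assms(2) unfolding var_ideal_def by blast
qed

lemma is_ideal_var_ideal: "C \<subseteq> {1..N} \<Longrightarrow> is_ideal (polyring N) (var_ideal N C :: 'k::field mpoly set)"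
  unfolding var_ideal_def
proof (rule is_ideal_gen_ideal[OF subring_polyring])
  assume C: "C \<subseteq> {1..N}"
  show "{var i |i. i \<in> C} \<subseteq> (polyring N :: 'k mpoly set)"
  proof
    fix x :: "'k mpoly" assume "x \<in> {var i |i. i \<in> C}"
    then obtain i where "x = var i" "i \<in> C" by blast
    then show "x \<in> polyring N" using C var_in_polyring[of i N] by auto
  qed
qed

lemma ideal_pow_var_ideal_keys:
  assumes C: "finite C" "C \<subseteq> {1..N}"
  shows "g \<in> ideal_pow (polyring N) (var_ideal N C) t \<Longrightarrow> \<forall>m\<in>Poly_Mapping.keys (g :: 'k::field mpoly). deg_in C m \<ge> t"
proof (induction t arbitrary: g)
  case 0 then show ?case by simp
next
  case (Suc t)
  have X: "\<forall>x\<in>{x * y |x y. x \<in> ideal_pow (polyring N) (var_ideal N C :: 'k mpoly set) t \<and> y \<in> var_ideal N C}. \<forall>m\<in>Poly_Mapping.keys (x :: 'k mpoly). deg_in C m \<ge> Suc t"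
  proof
    fix z :: "'k mpoly" assume "z \<in> {x * y |x y. x \<in> ideal_pow (polyring N) (var_ideal N C :: 'k mpoly set) t \<and> y \<in> var_ideal N C}"
    then obtain x y :: "'k mpoly" where z: "z = x * y" "x \<in> ideal_pow (polyring N) (var_ideal N C) t" "y \<in> var_ideal N C" by blast
    have "\<forall>m\<in>Poly_Mapping.keys (x * y). deg_in C m \<ge> t + 1"
      using keys_mult_deg_in_ge[OF Suc.IH[OF z(2)] var_ideal_keys[OF C(1) z(3)]] .
    then show "\<forall>m\<in>Poly_Mapping.keys z. deg_in C m \<ge> Suc t" using z by simp
  qed
  have "g \<in> gen_ideal (polyring N) {x * y |x y. x \<in> ideal_pow (polyring N) (var_ideal N C :: 'k mpoly set) t \<and> y \<in> var_ideal N C}"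
    using Suc.prems by simp
  from gen_ideal_keys[OF this X] show ?case .
qed

lemma poly_expand: "p = (\<Sum>m\<in>Poly_Mapping.keys p. Poly_Mapping.single m (Poly_Mapping.lookup p m))"
  by (rule poly_mapping_eqI) (auto simp: lookup_sum lookup_single when_def in_keys_iff)

lemma in_var_ideal_if_keys:
  assumes C: "C \<subseteq> {1..N}" and gR: "g \<in> polyring N" and gk: "\<forall>m\<in>Poly_Mapping.keys g. deg_in C m \<ge> 1"
  shows "(g :: 'k::field mpoly) \<in> var_ideal N C"
proof -
  have R: "subring (polyring N :: 'k mpoly set)" by (rule subring_polyring)
  have "(\<Sum>m\<in>Poly_Mapping.keys g. Poly_Mapping.single m (Poly_Mapping.lookup g m)) \<in> var_ideal N C"
  proof (rule ideal_sum[OF R is_ideal_var_ideal[OF C]], simp)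
    fix m assume m: "m \<in> Poly_Mapping.keys g"
    then obtain i m' where i: "i \<in> C" and mm: "m = m' + Poly_Mapping.single i 1"
      and "Poly_Mapping.keys m' \<subseteq> Poly_Mapping.keys m"
      using gk split_var_if_deg_in_pos[OF finite_subset[OF C]] by blast
    then have km': "Poly_Mapping.keys m' \<subseteq> {1..N}" using gR m by (auto simp: polyring_def)
    have "Poly_Mapping.single m (Poly_Mapping.lookup g m) = Poly_Mapping.single m' (Poly_Mapping.lookup g m) * var i"
      by (simp add: var_def mult_single mm)
    also have "\<dots> \<in> var_ideal N C" unfolding var_ideal_def
      by (rule mult_generator_in_gen_ideal[OF R], use i in blast, rule single_in_polyring[OF km'])
    finally show "Poly_Mapping.single m (Poly_Mapping.lookup g m) \<in> var_ideal N C" .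
  qed
  then show ?thesis using poly_expand[of g] by simp
qed

lemma single_in_ideal_pow_var_ideal:
  assumes C: "C \<subseteq> {1..N}"
  shows "Poly_Mapping.keys E \<subseteq> {1..N} \<Longrightarrow> deg_in C E \<ge> t \<Longrightarrow>
     (Poly_Mapping.single E 1 :: 'k::field mpoly) \<in> ideal_pow (polyring N) (var_ideal N C) t"
proof (induction t arbitrary: E)
  case 0 then show ?case by (simp add: single_in_polyring)
next
  case (Suc t)
  have fC: "finite C" using C finite_subset by blast
  have "deg_in C E \<ge> 1" using Suc.prems by simp
  then obtain i E' where i: "i \<in> C" and EE: "E = E' + Poly_Mapping.single i 1"
    and "Poly_Mapping.keys E' \<subseteq> Poly_Mapping.keys E"
    using split_var_if_deg_in_pos[OF fC] by blast
  then have kE': "Poly_Mapping.keys E' \<subseteq> {1..N}" using Suc.prems(1) by blast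
  have "deg_in C E' \<ge> t" using Suc.prems(2) EE deg_in_add[of C E'] deg_in_single[OF fC, of i] i by simp
  then have "(Poly_Mapping.single E' 1 :: 'k mpoly) \<in> ideal_pow (polyring N) (var_ideal N C) t"
    using Suc.IH kE' by blast
  moreover have "(var i :: 'k mpoly) \<in> var_ideal N C" unfolding var_ideal_def
    by (rule generator_in_gen_ideal[OF subring_polyring]) (use i in auto)
  ultimately have "Poly_Mapping.single E' 1 * var i \<in> ideal_pow (polyring N) (var_ideal N C :: 'k mpoly set) (Suc t)"
    by (rule mult_in_ideal_pow_Suc[OF subring_polyring])
  then show ?case by (simp add: var_def mult_single EE)
qed

definition low_part :: "nat set \<Rightarrow> 'k::field mpoly \<Rightarrow> 'k mpoly" where
  "low_part C g = (\<Sum>m\<in>Poly_Mapping.keys g \<inter> {m. deg_in C m = 0}. Poly_Mapping.single m (Poly_Mapping.lookup g m))"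
definition high_part :: "nat set \<Rightarrow> 'k::field mpoly \<Rightarrow> 'k mpoly" where
  "high_part C g = (\<Sum>m\<in>Poly_Mapping.keys g - {m. deg_in C m = 0}. Poly_Mapping.single m (Poly_Mapping.lookup g m))"

lemma low_part_add_high_part: "g = low_part C g + high_part C g"
proof -
  have "g = (\<Sum>m\<in>Poly_Mapping.keys g. Poly_Mapping.single m (Poly_Mapping.lookup g m))" by (rule poly_expand)
  also have "\<dots> = low_part C g + high_part C g"
    unfolding low_part_def high_part_def by (rule sum.Int_Diff) simp
  finally show ?thesis .
qed

lemma low_part_keys: "\<forall>m\<in>Poly_Mapping.keys (low_part C g). deg_in C m = 0"
  unfolding low_part_def by (rule keys_sum_all) auto

lemma high_part_keys: "\<forall>m\<in>Poly_Mapping.keys (high_part C g). deg_in C m \<ge> 1"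
  unfolding high_part_def by (rule keys_sum_all) (auto simp: Suc_le_eq)

lemma low_part_in_polyring: "g \<in> polyring N \<Longrightarrow> low_part C g \<in> polyring N"
  unfolding low_part_def by (intro subring_sum[OF subring_polyring] single_in_polyring) (auto simp: polyring_def)

lemma high_part_in_polyring: "g \<in> polyring N \<Longrightarrow> high_part C g \<in> polyring N"
  unfolding high_part_def by (intro subring_sum[OF subring_polyring] single_in_polyring) (auto simp: polyring_def)

lemma high_part_in_var_ideal: "C \<subseteq> {1..N} \<Longrightarrow> g \<in> polyring N \<Longrightarrow> high_part C g \<in> var_ideal N C"
  by (rule in_var_ideal_if_keys, assumption, rule high_part_in_polyring, assumption, rule high_part_keys)

lemma low_part_nonzero: "C \<subseteq> {1..N} \<Longrightarrow> g \<in> polyring N \<Longrightarrow> g \<notin> var_ideal N C \<Longrightarrow> low_part C g \<noteq> 0"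
  using low_part_add_high_part[of g C] high_part_in_var_ideal[of C N g] by auto

lemma one_notin_var_ideal: "C \<subseteq> {1..N} \<Longrightarrow> (1 :: 'k::field mpoly) \<notin> var_ideal N C"
proof
  assume C: "C \<subseteq> {1..N}" and "(1 :: 'k mpoly) \<in> var_ideal N C"
  then have "\<forall>m\<in>Poly_Mapping.keys (1 :: 'k mpoly). deg_in C m \<ge> 1" using var_ideal_keys finite_subset by blast
  then show False by simp
qed

lemma prime_var_ideal:
  assumes C: "C \<subseteq> {1..N}"
  shows "prime_ideal (polyring N) (var_ideal N C :: 'k::field mpoly set)"
  unfolding prime_ideal_def
proof (intro conjI ballI impI)
  have R: "subring (polyring N :: 'k mpoly set)" by (rule subring_polyring)
  have J: "is_ideal (polyring N) (var_ideal N C :: 'k mpoly set)" by (rule is_ideal_var_ideal[OF C])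
  show "is_ideal (polyring N) (var_ideal N C :: 'k mpoly set)" by (rule J)
  show "var_ideal N C \<noteq> (polyring N :: 'k mpoly set)"
    using one_notin_var_ideal[OF C] subring_1[OF R] by auto
  fix x y :: "'k mpoly"
  assume x: "x \<in> polyring N" and y: "y \<in> polyring N" and xy: "x * y \<in> var_ideal N C"
  show "x \<in> var_ideal N C \<or> y \<in> var_ideal N C"
  proof (rule ccontr)
    assume "\<not> (x \<in> var_ideal N C \<or> y \<in> var_ideal N C)"
    then have "low_part C x \<noteq> 0" "low_part C y \<noteq> 0" using low_part_nonzero[OF C] x y by auto
    then have "low_part C x * low_part C y \<noteq> 0" by simp
    define x0 x1 y0 y1 where "x0 = low_part C x" "x1 = high_part C x" "y0 = low_part C y" "y1 = high_part C y"
    have "x = x0 + x1" "y = y0 + y1" unfolding x0_x1_y0_y1_def by (rule low_part_add_high_part)+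
    then have "x0 * y0 = x * y - (x0 * y1 + x1 * y)" by (simp add: algebra_simps)
    moreover have "x0 * y1 + x1 * y \<in> var_ideal N C" unfolding x0_x1_y0_y1_def
      by (intro ideal_add[OF R J] ideal_mult_left[OF R J] ideal_mult_right[OF R J]
          low_part_in_polyring high_part_in_var_ideal C x y)
    ultimately have "x0 * y0 \<in> var_ideal N C" using xy by (simp add: ideal_diff[OF R J])
    then have "\<forall>m\<in>Poly_Mapping.keys (x0 * y0). deg_in C m \<ge> 1"
      using var_ideal_keys C finite_subset by blast
    moreover have "\<forall>m\<in>Poly_Mapping.keys (x0 * y0). deg_in C m = 0"
      unfolding x0_x1_y0_y1_def using keys_mult_deg_in_eq[OF low_part_keys low_part_keys] by simp
    ultimately have "Poly_Mapping.keys (x0 * y0) = {}" by fastforce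
    then show False using \<open>low_part C x * low_part C y \<noteq> 0\<close> by (simp add: x0_x1_y0_y1_def)
  qed
qed

text \<open>The part of \<open>f\<close> free of the variables in \<open>C\<close> survives in \<open>f ^ k * x ^ E\<close> as a
  nonzero sum of monomials of \<open>C\<close>-degree exactly \<open>deg_in C E\<close>, while every monomial of
  an element of \<open>var_ideal N C ^ t\<close> has \<open>C\<close>-degree at least \<open>t\<close>.\<close>
lemma power_mult_single_notin_ideal_pow:
  assumes C: "C \<subseteq> {1..N}" and fR: "f \<in> polyring N" and fP: "f \<notin> var_ideal N C"
    and dE: "deg_in C E < t"
  shows "(f :: 'k::field mpoly) ^ k * Poly_Mapping.single E 1 \<notin> ideal_pow (polyring N) (var_ideal N C) t"
proof
  assume mem: "f ^ k * Poly_Mapping.single E 1 \<in> ideal_pow (polyring N) (var_ideal N C) t"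
  have R: "subring (polyring N :: 'k mpoly set)" by (rule subring_polyring)
  have J: "is_ideal (polyring N) (var_ideal N C :: 'k mpoly set)" by (rule is_ideal_var_ideal[OF C])
  have fC: "finite C" using C finite_subset by blast
  define f0 where "f0 = low_part C f"
  obtain h where h: "h \<in> var_ideal N C" "f ^ k = f0 ^ k + h"
    using power_add_ideal[OF R J low_part_in_polyring[OF fR, of C] high_part_in_var_ideal[OF C fR], where k=k]
    by (auto simp: f0_def simp flip: low_part_add_high_part)
  define X where "X = (Poly_Mapping.single E 1 :: 'k mpoly)"
  have kX: "\<forall>m\<in>Poly_Mapping.keys X. deg_in C m = deg_in C E" by (simp add: X_def)
  have "X \<noteq> 0" unfolding X_def by (metis lookup_single_eq lookup_zero one_neq_zero)
  then have "f0 ^ k * X \<noteq> 0" using low_part_nonzero[OF C fR fP] by (simp add: f0_def)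
  then obtain m where m: "m \<in> Poly_Mapping.keys (f0 ^ k * X)" by fastforce
  have dm: "deg_in C m = deg_in C E"
    using keys_mult_deg_in_eq[OF keys_power_deg_in_eq[OF low_part_keys] kX] m by (simp add: f0_def)
  have "\<forall>m\<in>Poly_Mapping.keys (h * X). deg_in C m \<ge> 1 + deg_in C E"
    using keys_mult_deg_in_ge[OF var_ideal_keys[OF fC h(1)], of X "deg_in C E"] kX by simp
  then have "m \<notin> Poly_Mapping.keys (h * X)" using dm by fastforce
  then have "Poly_Mapping.lookup (h * X) m = 0" by (simp add: in_keys_iff)
  moreover have "f ^ k * X = f0 ^ k * X + h * X" using h(2) by (simp add: algebra_simps)
  ultimately have "m \<in> Poly_Mapping.keys (f ^ k * X)" using m by (simp add: in_keys_iff lookup_add)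
  then have "deg_in C m \<ge> t" using ideal_pow_var_ideal_keys[OF fC C mem[folded X_def]] by blast
  then show False using dm dE by simp
qed

section \<open>Edge ideals\<close>

definition edge_ideal :: "nat \<Rightarrow> (nat \<Rightarrow> nat \<Rightarrow> bool) \<Rightarrow> 'k::field mpoly set" where
  "edge_ideal N adj = gen_ideal (polyring N) {var i * var j | i j. adj i j}"

lemma edge_ideal_circ_eq: "edge_ideal_circ n a = edge_ideal (2 * n) (circ_adj n a)"
  by (simp add: edge_ideal_circ_def edge_ideal_def)

definition edge_list_exp :: "(nat \<times> nat) list \<Rightarrow> (nat \<Rightarrow>\<^sub>0 nat)" where
  "edge_list_exp L = sum_list (map (\<lambda>p. Poly_Mapping.single (fst p) 1 + Poly_Mapping.single (snd p) 1) L)"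

lemma lookup_edge_list_exp: "Poly_Mapping.lookup (edge_list_exp L) x = endpoint_count L x"
  by (induction L) (auto simp: edge_list_exp_def lookup_add lookup_single when_def)

lemma single_power: "(Poly_Mapping.single m (1::'k::field) :: 'k mpoly) ^ k = Poly_Mapping.single (\<Sum>i<k. m) 1"
  by (induction k) (auto simp del: sum_constant simp: mult_single add.commute)

locale var_graph = finite_graph "{1..N}" adj for N :: nat and adj :: "nat \<Rightarrow> nat \<Rightarrow> bool"
begin

definition min_vertex_cover :: "nat set \<Rightarrow> bool" where
  "min_vertex_cover C \<longleftrightarrow> vertex_cover C \<and> (\<forall>C'. vertex_cover C' \<and> C' \<subseteq> C \<longrightarrow> C' = C)"

lemma exists_min_vertex_cover_subset:
  assumes "vertex_cover C"
  shows "\<exists>C0\<subseteq>C. min_vertex_cover C0"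
proof -
  define P where "P D \<longleftrightarrow> vertex_cover D \<and> D \<subseteq> C" for D
  obtain C0 where C0: "P C0" and least: "\<And>D. P D \<Longrightarrow> card C0 \<le> card D"
    using assms ex_has_least_nat[of P C card] unfolding P_def by blast
  have "finite C0" using C0 finite_vertex_cover by (simp add: P_def)
  have "min_vertex_cover C0" unfolding min_vertex_cover_def
  proof (intro conjI allI impI)
    show "vertex_cover C0" using C0 by (simp add: P_def)
    fix C' assume C': "vertex_cover C' \<and> C' \<subseteq> C0"
    then have "card C0 \<le> card C'" using C0 by (intro least) (auto simp: P_def)
    then show "C' = C0" using C' \<open>finite C0\<close> card_seteq by blast
  qed
  then show ?thesis using C0 by (auto simp: P_def)
qed

lemma edges_subset_polyring: "{var i * var j | i j. adj i j} \<subseteq> (polyring N :: 'k::field mpoly set)"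
  using adj_in_V by (auto intro!: subring_mult[OF subring_polyring] var_in_polyring)

lemma is_ideal_edge_ideal: "is_ideal (polyring N) (edge_ideal N adj :: 'k::field mpoly set)"
  unfolding edge_ideal_def by (rule is_ideal_gen_ideal[OF subring_polyring edges_subset_polyring])

lemma edge_in_edge_ideal: "adj i j \<Longrightarrow> (var i * var j :: 'k::field mpoly) \<in> edge_ideal N adj"
  unfolding edge_ideal_def by (rule generator_in_gen_ideal[OF subring_polyring]) blast

lemma edge_ideal_subset_var_ideal:
  assumes "vertex_cover C"
  shows "(edge_ideal N adj :: 'k::field mpoly set) \<subseteq> var_ideal N C"
  unfolding edge_ideal_def
proof (rule gen_ideal_least[OF subring_polyring])
  show "is_ideal (polyring N) (var_ideal N C :: 'k mpoly set)"
    by (rule is_ideal_var_ideal[OF vertex_cover_subset[OF assms]])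
  have "(var i * var j :: 'k mpoly) \<in> var_ideal N C" if ij: "adj i j" for i j
  proof -
    have gen: "var k * var l \<in> (var_ideal N C :: 'k mpoly set)" if "l \<in> C" "k \<in> {1..N}" for k l
      unfolding var_ideal_def using that
      by (intro mult_generator_in_gen_ideal[OF subring_polyring] var_in_polyring) auto
    have "i \<in> C \<or> j \<in> C" using vertex_cover_edge[OF assms ij] .
    then show ?thesis using gen[of j i] gen[of i j] adj_in_V[OF ij] by (auto simp: mult.commute)
  qed
  then show "{var i * var j |i j. adj i j} \<subseteq> (var_ideal N C :: 'k mpoly set)" by blast
qed

lemma var_in_var_ideal: "finite C \<Longrightarrow> (var i :: 'k::field mpoly) \<in> var_ideal N C \<Longrightarrow> i \<in> C"
  using var_ideal_keys[of C "var i :: 'k mpoly" N] by (auto simp: var_def deg_in_single split: if_splits)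

lemma prime_above_edge_ideal:
  assumes P: "prime_ideal (polyring N) P" and IP: "(edge_ideal N adj :: 'k::field mpoly set) \<subseteq> P"
  defines "C \<equiv> {i\<in>{1..N}. (var i :: 'k mpoly) \<in> P}"
  shows "vertex_cover C \<and> var_ideal N C \<subseteq> P"
proof
  show "vertex_cover C" unfolding vertex_cover_def
  proof (intro conjI allI impI)
    show "C \<subseteq> {1..N}" by (auto simp: C_def)
    fix i j assume ij: "adj i j"
    then have "(var i * var j :: 'k mpoly) \<in> P" using IP edge_in_edge_ideal by blast
    then have "(var i :: 'k mpoly) \<in> P \<or> var j \<in> P"
      using P var_in_polyring adj_in_V[OF ij] unfolding prime_ideal_def by blast
    then show "i \<in> C \<or> j \<in> C" using adj_in_V[OF ij] by (auto simp: C_def)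
  qed
  show "var_ideal N C \<subseteq> P" unfolding var_ideal_def
    by (rule gen_ideal_least[OF subring_polyring]) (use P in \<open>auto simp: prime_ideal_def C_def\<close>)
qed

lemma minimal_prime_edge_ideal_obtain:
  assumes "P \<in> minimal_primes (polyring N) (edge_ideal N adj :: 'k::field mpoly set)"
  shows "\<exists>C. vertex_cover C \<and> P = var_ideal N C"
proof -
  have P: "prime_ideal (polyring N) P" and IP: "edge_ideal N adj \<subseteq> P"
    and least: "\<And>Q. prime_ideal (polyring N) Q \<Longrightarrow> edge_ideal N adj \<subseteq> Q \<Longrightarrow> Q \<subseteq> P \<Longrightarrow> Q = P"
    using assms by (auto simp: minimal_primes_def)
  obtain C where C: "vertex_cover C" "var_ideal N C \<subseteq> P" using prime_above_edge_ideal[OF P IP] by blast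
  then have "var_ideal N C = P"
    by (intro least prime_var_ideal edge_ideal_subset_var_ideal vertex_cover_subset)
  then show ?thesis using C by blast
qed

lemma minimal_prime_var_ideal:
  assumes mc: "min_vertex_cover C"
  shows "(var_ideal N C :: 'k::field mpoly set) \<in> minimal_primes (polyring N) (edge_ideal N adj)"
proof -
  have cC: "vertex_cover C" using mc by (simp add: min_vertex_cover_def)
  have C: "C \<subseteq> {1..N}" using vertex_cover_subset[OF cC] .
  have "Q = var_ideal N C"
    if Q: "prime_ideal (polyring N) Q" and IQ: "edge_ideal N adj \<subseteq> Q" and QC: "Q \<subseteq> (var_ideal N C :: 'k mpoly set)"
    for Q
  proof -
    define C' where "C' = {i\<in>{1..N}. (var i :: 'k mpoly) \<in> Q}"
    have cC': "vertex_cover C'" and sub: "var_ideal N C' \<subseteq> Q"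
      using prime_above_edge_ideal[OF Q IQ] by (auto simp: C'_def)
    have "C' \<subseteq> C" using QC var_in_var_ideal[OF finite_vertex_cover[OF cC]] by (auto simp: C'_def)
    then have "C' = C" using mc cC' by (auto simp: min_vertex_cover_def)
    then show ?thesis using sub QC by auto
  qed
  then show ?thesis unfolding minimal_primes_def using prime_var_ideal[OF C] edge_ideal_subset_var_ideal[OF cC] by blast
qed

lemma edge_list_in_ideal_pow:
  "\<forall>p\<in>set L. adj (fst p) (snd p) \<Longrightarrow>
   (Poly_Mapping.single (edge_list_exp L) 1 :: 'k::field mpoly) \<in> ideal_pow (polyring N) (edge_ideal N adj) (length L)"
proof (induction L)
  case Nil
  then show ?case using subring_1[OF subring_polyring] by (simp add: edge_list_exp_def)
next
  case (Cons p L)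
  have "Poly_Mapping.single (edge_list_exp L) 1 * (var (fst p) * var (snd p))
      \<in> ideal_pow (polyring N) (edge_ideal N adj :: 'k mpoly set) (Suc (length L))"
    using Cons by (intro mult_in_ideal_pow_Suc[OF subring_polyring] edge_in_edge_ideal) auto
  moreover have "Poly_Mapping.single (edge_list_exp L) 1 * (var (fst p) * var (snd p))
      = (Poly_Mapping.single (edge_list_exp (p # L)) 1 :: 'k mpoly)"
    by (simp add: var_def mult_single edge_list_exp_def add_ac)
  ultimately show ?case by simp
qed

end

lemma in_radical_if_monomials_in_radical:
  assumes J: "is_ideal (polyring N) J" and f: "f \<in> polyring N"
    and mono: "\<And>m. m \<in> Poly_Mapping.keys f \<Longrightarrow> Poly_Mapping.single m 1 \<in> radical (polyring N) J"
  shows "(f :: 'k::field mpoly) \<in> radical (polyring N) J"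
proof -
  have R: "subring (polyring N :: 'k mpoly set)" by (rule subring_polyring)
  have "f = (\<Sum>m\<in>Poly_Mapping.keys f. Poly_Mapping.single 0 (Poly_Mapping.lookup f m) * Poly_Mapping.single m 1)"
    using poly_expand[of f] by (simp add: mult_single)
  also have "\<dots> \<in> radical (polyring N) J"
    using mono by (intro radical_sum[OF R J] radical_mult[OF R J] single_in_polyring) auto
  finally show ?thesis .
qed

context var_graph
begin

lemma cheap_vertex_cover_if_notin_symbolic_power:
  assumes "(monom N e :: 'k::field mpoly) \<notin> symbolic_power (polyring N) (edge_ideal N adj) t"
  shows "\<exists>C. vertex_cover C \<and> sum e C < t"
proof -
  have "(monom N e :: 'k mpoly) \<in> polyring N"
    unfolding monom_eq_single by (rule single_in_polyring[OF keys_monom_exp])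
  then obtain P where P: "P \<in> minimal_primes (polyring N) (edge_ideal N adj)"
    and notin: "(monom N e :: 'k mpoly) \<notin> ideal_pow (polyring N) P t"
    using assms by (auto simp: symbolic_power_def)
  obtain C where C: "vertex_cover C" "P = var_ideal N C"
    using minimal_prime_edge_ideal_obtain[OF P] by blast
  have CV: "C \<subseteq> {1..N}" by (rule vertex_cover_subset[OF C(1)])
  have "\<not> t \<le> sum e C"
  proof
    assume "t \<le> sum e C"
    then have "t \<le> deg_in C (monom_exp N e)" using deg_in_monom_exp[OF CV] by simp
    then have "(monom N e :: 'k mpoly) \<in> ideal_pow (polyring N) P t"
      unfolding C(2) monom_eq_single by (rule single_in_ideal_pow_var_ideal[OF CV keys_monom_exp])
    then show False using notin by blast
  qed
  then show ?thesis using C(1) by auto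
qed

lemma in_var_ideal_if_in_radical_colon:
  assumes f: "f \<in> radical (polyring N) (colon (polyring N) (symbolic_power (polyring N) (edge_ideal N adj) t) (monom N e))"
    and C: "min_vertex_cover C" "sum e C < t"
  shows "(f :: 'k::field mpoly) \<in> var_ideal N C"
proof (rule ccontr)
  assume "f \<notin> var_ideal N C"
  obtain k where fR: "f \<in> polyring N"
    and fk: "f ^ k * monom N e \<in> symbolic_power (polyring N) (edge_ideal N adj) t"
    using f by (auto simp: radical_def colon_def)
  have CV: "C \<subseteq> {1..N}" using C(1) vertex_cover_subset by (simp add: min_vertex_cover_def)
  have "f ^ k * monom N e \<in> ideal_pow (polyring N) (var_ideal N C) t"
    using fk minimal_prime_var_ideal[OF C(1)] by (auto simp: symbolic_power_def)
  moreover have "deg_in C (monom_exp N e) < t" using C(2) deg_in_monom_exp[OF CV] by simp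
  ultimately show False
    using power_mult_single_notin_ideal_pow[OF CV fR \<open>f \<notin> var_ideal N C\<close>] by (simp add: monom_eq_single)
qed

text \<open>A light vertex cover avoiding the support of \<open>m\<close> would contain a minimal one, whose
  prime ideal contains \<open>f\<close> and hence a variable of \<open>m\<close>.\<close>
lemma heavy_if_avoids_monomial:
  assumes f: "f \<in> radical (polyring N) (colon (polyring N) (symbolic_power (polyring N) (edge_ideal N adj) t) (monom N e))"
    and m: "m \<in> Poly_Mapping.keys (f :: 'k::field mpoly)"
    and C: "vertex_cover C" "C \<inter> Poly_Mapping.keys m = {}"
  shows "t \<le> sum e C"
proof (rule ccontr)
  assume "\<not> t \<le> sum e C"
  obtain C' where C': "C' \<subseteq> C" "min_vertex_cover C'"
    using exists_min_vertex_cover_subset[OF C(1)] by blast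
  have "sum e C' \<le> sum e C" using C'(1) finite_vertex_cover[OF C(1)] by (intro sum_mono2) auto
  then have "f \<in> var_ideal N C'"
    using in_var_ideal_if_in_radical_colon[OF f C'(2)] \<open>\<not> t \<le> sum e C\<close> by simp
  moreover have fin: "finite C'" using C'(1) finite_vertex_cover[OF C(1)] finite_subset by blast
  ultimately have "deg_in C' m \<ge> 1" using var_ideal_keys m by blast
  then show False using C C'(1) deg_in_pos_iff[OF fin] by blast
qed

lemma single_in_radical_colon_ideal_pow:
  assumes mV: "Poly_Mapping.keys m \<subseteq> {1..N}"
    and L: "length L = t" "\<forall>p\<in>set L. adj (fst p) (snd p)"
      "\<forall>x. x \<notin> Poly_Mapping.keys m \<longrightarrow> endpoint_count L x \<le> e x"
  shows "(Poly_Mapping.single m 1 :: 'k::field mpoly)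
    \<in> radical (polyring N) (colon (polyring N) (ideal_pow (polyring N) (edge_ideal N adj) t) (monom N e))"
proof -
  have R: "subring (polyring N :: 'k mpoly set)" by (rule subring_polyring)
  define T where "T = (\<Sum>i<t. m) + monom_exp N e"
  have lookup_T: "Poly_Mapping.lookup T x = t * Poly_Mapping.lookup m x + Poly_Mapping.lookup (monom_exp N e) x" for x
    by (simp del: sum_constant add: T_def lookup_add lookup_sum) (simp add: sum_constant)
  have "endpoint_count L x \<le> Poly_Mapping.lookup T x" for x
  proof (cases "x \<in> Poly_Mapping.keys m")
    case True
    then have "t \<le> t * Poly_Mapping.lookup m x" by (simp add: in_keys_iff)
    then show ?thesis using endpoint_count_le_length_edges[OF L(2), of x] L(1) lookup_T[of x] by linarith
  next
    case False
    then show ?thesis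
      using L(3) endpoint_count_outside[OF L(2), of x] lookup_T[of x]
      by (cases "x \<in> {1..N}") (auto simp: lookup_monom_exp)
  qed
  then obtain r where Tr: "T = edge_list_exp L + r"
    by (intro that[of "T - edge_list_exp L"] poly_mapping_eqI)
       (simp add: lookup_add lookup_minus lookup_edge_list_exp)
  have "Poly_Mapping.keys r \<subseteq> Poly_Mapping.keys T" using Tr by (auto simp: in_keys_iff lookup_add)
  also have "\<dots> \<subseteq> Poly_Mapping.keys m \<union> Poly_Mapping.keys (monom_exp N e)"
    by (auto simp: in_keys_iff lookup_T)
  also have "\<dots> \<subseteq> {1..N}" using mV keys_monom_exp by blast
  finally have rV: "Poly_Mapping.keys r \<subseteq> {1..N}" .
  have "Poly_Mapping.single m 1 ^ t * monom N e = Poly_Mapping.single (edge_list_exp L) 1 * (Poly_Mapping.single r 1 :: 'k mpoly)"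
    unfolding single_power monom_eq_single by (simp del: sum_constant add: mult_single T_def[symmetric] Tr)
  also have "\<dots> \<in> ideal_pow (polyring N) (edge_ideal N adj) t"
    using edge_list_in_ideal_pow[OF L(2), where 'k='k] L(1) single_in_polyring[OF rV]
    by (intro ideal_mult_right[OF R is_ideal_ideal_pow[OF R ideal_subset[OF R is_ideal_edge_ideal]]]) auto
  finally show ?thesis
    using single_in_polyring[OF mV] subring_power[OF R] by (auto simp: radical_def colon_def)
qed

theorem radical_colon_ideal_pow_eq_symbolic_power:
  assumes bip: "\<And>v. v \<in> {1..N} \<Longrightarrow>
      \<exists>col. bipartite (\<lambda>x y. adj x y \<and> x \<noteq> v \<and> y \<noteq> v \<and> \<not> adj v x \<and> \<not> adj v y) col"
    and X: "(monom N e :: 'k::field mpoly) \<notin> symbolic_power (polyring N) (edge_ideal N adj) t"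
  shows "radical (polyring N) (colon (polyring N) (ideal_pow (polyring N) (edge_ideal N adj) t) (monom N e :: 'k mpoly))
    = radical (polyring N) (colon (polyring N) (symbolic_power (polyring N) (edge_ideal N adj) t) (monom N e))"
    (is "?pow = ?symb")
proof
  have R: "subring (polyring N :: 'k mpoly set)" by (rule subring_polyring)
  have I: "edge_ideal N adj \<subseteq> (polyring N :: 'k mpoly set)" by (rule ideal_subset[OF R is_ideal_edge_ideal])
  show "?pow \<subseteq> ?symb"
    using ideal_pow_subset_symbolic_power[OF R I, of t] unfolding radical_def colon_def by blast
  show "?symb \<subseteq> ?pow"
  proof
    fix f assume f: "f \<in> ?symb"
    then have fR: "f \<in> polyring N" by (simp add: radical_def)
    have "Poly_Mapping.single m 1 \<in> ?pow" if m: "m \<in> Poly_Mapping.keys f" for m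
    proof -
      have mV: "Poly_Mapping.keys m \<subseteq> {1..N}" using fR m by (auto simp: polyring_def)
      have heavy: "\<And>C. vertex_cover C \<Longrightarrow> C \<inter> Poly_Mapping.keys m = {} \<Longrightarrow> t \<le> sum e C"
        using heavy_if_avoids_monomial[OF f m] by blast
      obtain C0 where "vertex_cover C0" "sum e C0 < t"
        using cheap_vertex_cover_if_notin_symbolic_power[OF X] by blast
      then obtain v where v: "v \<in> Poly_Mapping.keys m" using heavy by fastforce
      then obtain col where "bipartite (\<lambda>x y. adj x y \<and> x \<noteq> v \<and> y \<noteq> v \<and> \<not> adj v x \<and> \<not> adj v y) col"
        using bip mV by blast
      then obtain L where "length L = t" "\<forall>p\<in>set L. adj (fst p) (snd p)"
        "\<forall>x. x \<notin> Poly_Mapping.keys m \<longrightarrow> endpoint_count L x \<le> e x"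
        using exists_edge_list[OF mV v _ heavy] by blast
      then show ?thesis by (rule single_in_radical_colon_ideal_pow[OF mV])
    qed
    moreover have "is_ideal (polyring N) (colon (polyring N) (ideal_pow (polyring N) (edge_ideal N adj) t) (monom N e :: 'k mpoly))"
      unfolding monom_eq_single
      by (intro is_ideal_colon[OF R] is_ideal_ideal_pow[OF R I] single_in_polyring[OF keys_monom_exp])
    ultimately show "f \<in> ?pow"
      using in_radical_if_monomials_in_radical[OF _ fR] by blast
  qed
qed

end

theorem lemma4p2:
  fixes n a t :: nat and e :: "nat \<Rightarrow> nat"
  assumes "1 \<le> a" and "a < n"
    and "circ_connected n a"
    and "t \<ge> 1"
    and "(monom (2*n) e :: 'k::field mpoly)
           \<notin> symbolic_power (polyring (2*n)) (edge_ideal_circ n a) t"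
  shows "radical (polyring (2*n))
           (colon (polyring (2*n)) (ideal_pow (polyring (2*n)) (edge_ideal_circ n a) t)
              (monom (2*n) e :: 'k mpoly))
       = radical (polyring (2*n))
           (colon (polyring (2*n)) (symbolic_power (polyring (2*n)) (edge_ideal_circ n a) t)
              (monom (2*n) e))"
proof -
  interpret var_graph "2 * n" "circ_adj n a"
    unfolding var_graph_def by (rule finite_graph_circ)
  have "coprime a n" using assms(1-3) by (rule coprime_if_circ_connected)
  then show ?thesis
    unfolding edge_ideal_circ_eq
    using circ_bipartite_off_nbhd_exists[OF assms(1,2)] assms(5)
    by (intro radical_colon_ideal_pow_eq_symbolic_power) (auto simp: edge_ideal_circ_eq)
qed

end
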